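(* Let $\mathbf g$ be a two-species local jump rate and let $\{\mu_0^N\}$, $\mu_0^N$ a probability measure on $(\mathbb N_0^2)^{\mathbb T_N^d}$, be an entropy local equilibrium of a profile $\boldsymbol\rho\in C(\mathbb T^d;\mathbf R(\mathcal D_{\mathbf R}^o))$. Then for some (equivalently, every) $\mathbf a\in\mathbf R(\mathcal D_{\mathbf R}^o)\cap(0,\infty)^2$, $$\limsup_{N\to\infty}\frac1{N^d}\mathcal H(\mu_0^N\,|\,\nu^N_{\mathbf a})<+\infty.$$
   Context: A two-species local jump rate is $\mathbf g=(g_1,g_2):\mathbb N_0^2\to\mathbb R_+^2$ with $g_i(\mathbf k)=0$ iff $k_i=0$, $\sup_{\mathbf k}|g_i(\mathbf k+\mathbf e_i)-g_i(\mathbf k)|<\infty$, $g_1(\mathbf k)g_2(\mathbf k-\mathbf e_1)=g_1(\mathbf k-\mathbf e_2)g_2(\mathbf k)$ for $k_1,k_2\ge1$, and $\liminf_{|\mathbf k|_1\to\infty}\mathbf g!(\mathbf k)^{1/|\mathbf k|_1}>0$, where $\mathbf g!(\mathbf k)$ is the product of $g_{i_\ell}(\gamma(\ell))$ along any increasing unit-step lattice path $\gamma$ from $0$ to $\mathbf k$, $\mathbf g!(\mathbf 0)=1$. $Z(\boldsymbol\varphi)=\sum_{\mathbf k}\varphi_1^{k_1}\varphi_2^{k_2}/\mathbf g!(\mathbf k)$, $\mathcal D_Z=\{Z<\infty\}\subset\mathbb R_+^2$; $\bar\nu^1_{\boldsymbol\varphi}(\mathbf k)=\boldsymbol\varphi^{\mathbf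 k}/(Z(\boldsymbol\varphi)\mathbf g!(\mathbf k))$; $\mathbf R(\boldsymbol\varphi)=\sum_{\mathbf k}\mathbf k\bar\nu^1_{\boldsymbol\varphi}(\mathbf k)$; $\mathcal D_{\mathbf R}=\{\boldsymbol\varphi\in\mathcal D_Z:\mathbf R(\boldsymbol\varphi)\in\mathbb R_+^2\}$, interior ${}^o$ relative to $\mathbb R_+^2$; $\boldsymbol\Phi=\mathbf R^{-1}$ on $\mathbf R(\mathcal D_{\mathbf R})$. $\nu^1_{\boldsymbol\rho}=\bar\nu^1_{\boldsymbol\Phi(\boldsymbol\rho)}$, $\nu^N_{\mathbf a}=\bigotimes_{x\in\mathbb T_N^d}\nu^1_{\mathbf a}$, and $\nu^N_{\boldsymbol\rho(\cdot)}=\bigotimes_x\nu^1_{\boldsymbol\rho(x/N)}$. An entropy local equilibrium of profile $\boldsymbol\rho(\cdot)$ is a sequence with $\limsup_N N^{-d}\mathcal H(\mu^N|\nu^N_{\boldsymbol\rho(\cdot)})=0$, $\mathcal H$ the relative entropy. *)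

theory Defs
  imports "HOL-Probability.Probability"
begin

text \<open>The rate g = (g1, g2) is given by two functions on pairs (k1,k2).
  g!(k) is computed along the increasing path that first raises k1 and then k2
  (path independence follows from the commutativity condition).\<close>

definition gfact :: "(nat \<times> nat \<Rightarrow> real) \<Rightarrow> (nat \<times> nat \<Rightarrow> real) \<Rightarrow> nat \<times> nat \<Rightarrow> real" where
  "gfact g1 g2 k = (\<Prod>j\<in>{1..fst k}. g1 (j, 0)) * (\<Prod>l\<in>{1..snd k}. g2 (fst k, l))"

definition local_jump_rate :: "(nat \<times> nat \<Rightarrow> real) \<Rightarrow> (nat \<times> nat \<Rightarrow> real) \<Rightarrow> bool" where
  "local_jump_rate g1 g2 \<longleftrightarrow>
     (\<forall>k. g1 k \<ge> 0 \<and> g2 k \<ge> 0) \<and>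
     (\<forall>k. g1 k = 0 \<longleftrightarrow> fst k = 0) \<and>
     (\<forall>k. g2 k = 0 \<longleftrightarrow> snd k = 0) \<and>
     (\<exists>C. \<forall>k1 k2. \<bar>g1 (k1 + 1, k2) - g1 (k1, k2)\<bar> \<le> C) \<and>
     (\<exists>C. \<forall>k1 k2. \<bar>g2 (k1, k2 + 1) - g2 (k1, k2)\<bar> \<le> C) \<and>
     (\<forall>k1 k2. k1 \<ge> 1 \<longrightarrow> k2 \<ge> 1 \<longrightarrow>
         g1 (k1, k2) * g2 (k1 - 1, k2) = g1 (k1, k2 - 1) * g2 (k1, k2)) \<and>
     Liminf cofinite (\<lambda>k. ereal (gfact g1 g2 k powr (1 / real (fst k + snd k)))) > 0"

definition Rplus2 :: "(real \<times> real) set" where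
  "Rplus2 = {\<phi>. fst \<phi> \<ge> 0 \<and> snd \<phi> \<ge> 0}"

definition Zterm :: "(nat \<times> nat \<Rightarrow> real) \<Rightarrow> (nat \<times> nat \<Rightarrow> real) \<Rightarrow> real \<times> real \<Rightarrow> nat \<times> nat \<Rightarrow> real" where
  "Zterm g1 g2 \<phi> k = fst \<phi> ^ fst k * snd \<phi> ^ snd k / gfact g1 g2 k"

definition Zfun :: "(nat \<times> nat \<Rightarrow> real) \<Rightarrow> (nat \<times> nat \<Rightarrow> real) \<Rightarrow> real \<times> real \<Rightarrow> real" where
  "Zfun g1 g2 \<phi> = (\<Sum>\<^sub>\<infinity>k. Zterm g1 g2 \<phi> k)"

definition DZ :: "(nat \<times> nat \<Rightarrow> real) \<Rightarrow> (nat \<times> nat \<Rightarrow> real) \<Rightarrow> (real \<times> real) set" where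
  "DZ g1 g2 = {\<phi> \<in> Rplus2. Zterm g1 g2 \<phi> summable_on UNIV}"

definition nubar1 :: "(nat \<times> nat \<Rightarrow> real) \<Rightarrow> (nat \<times> nat \<Rightarrow> real) \<Rightarrow> real \<times> real \<Rightarrow> nat \<times> nat \<Rightarrow> real" where
  "nubar1 g1 g2 \<phi> k = Zterm g1 g2 \<phi> k / Zfun g1 g2 \<phi>"

definition Rfun :: "(nat \<times> nat \<Rightarrow> real) \<Rightarrow> (nat \<times> nat \<Rightarrow> real) \<Rightarrow> real \<times> real \<Rightarrow> real \<times> real" where
  "Rfun g1 g2 \<phi> = ((\<Sum>\<^sub>\<infinity>k. real (fst k) * nubar1 g1 g2 \<phi> k),
                   (\<Sum>\<^sub>\<infinity>k. real (snd k) * nubar1 g1 g2 \<phi> k))"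

definition DR :: "(nat \<times> nat \<Rightarrow> real) \<Rightarrow> (nat \<times> nat \<Rightarrow> real) \<Rightarrow> (real \<times> real) set" where
  "DR g1 g2 = {\<phi> \<in> DZ g1 g2.
      (\<lambda>k. real (fst k) * nubar1 g1 g2 \<phi> k) summable_on UNIV \<and>
      (\<lambda>k. real (snd k) * nubar1 g1 g2 \<phi> k) summable_on UNIV}"

definition DR_int :: "(nat \<times> nat \<Rightarrow> real) \<Rightarrow> (nat \<times> nat \<Rightarrow> real) \<Rightarrow> (real \<times> real) set" where
  "DR_int g1 g2 = {\<phi> \<in> Rplus2. \<exists>U. open U \<and> \<phi> \<in> U \<and> U \<inter> Rplus2 \<subseteq> DR g1 g2}"

definition Phi :: "(nat \<times> nat \<Rightarrow> real) \<Rightarrow> (nat \<times> nat \<Rightarrow> real) \<Rightarrow> real \<times> real \<Rightarrow> real \<times> real" where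
  "Phi g1 g2 \<rho> = (THE \<phi>. \<phi> \<in> DR g1 g2 \<and> Rfun g1 g2 \<phi> = \<rho>)"

definition nu1 :: "(nat \<times> nat \<Rightarrow> real) \<Rightarrow> (nat \<times> nat \<Rightarrow> real) \<Rightarrow> real \<times> real \<Rightarrow> nat \<times> nat \<Rightarrow> real" where
  "nu1 g1 g2 \<rho> = nubar1 g1 g2 (Phi g1 g2 \<rho>)"

text \<open>T_N^d = sites x :: 'd \<Rightarrow> nat with 0 \<le> x i < N; configurations are maps
  from sites to N_0^2, extended by (0,0) outside the torus.\<close>

definition sites :: "nat \<Rightarrow> ('d::finite \<Rightarrow> nat) set" where
  "sites N = {x. \<forall>i. x i < N}"

definition configs :: "nat \<Rightarrow> (('d::finite \<Rightarrow> nat) \<Rightarrow> nat \<times> nat) set" where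
  "configs N = {\<eta>. \<forall>x. x \<notin> sites N \<longrightarrow> \<eta> x = (0, 0)}"

definition scaled_site :: "nat \<Rightarrow> ('d::finite \<Rightarrow> nat) \<Rightarrow> real ^ 'd" where
  "scaled_site N x = (\<chi> i. real (x i) / real N)"

definition nuN_prof :: "(nat \<times> nat \<Rightarrow> real) \<Rightarrow> (nat \<times> nat \<Rightarrow> real) \<Rightarrow> (real ^ 'd \<Rightarrow> real \<times> real)
     \<Rightarrow> nat \<Rightarrow> (('d::finite \<Rightarrow> nat) \<Rightarrow> nat \<times> nat) \<Rightarrow> real" where
  "nuN_prof g1 g2 \<rho> N \<eta> =
     (if \<eta> \<in> configs N then (\<Prod>x\<in>sites N. nu1 g1 g2 (\<rho> (scaled_site N x)) (\<eta> x)) else 0)"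

definition nuN_const :: "(nat \<times> nat \<Rightarrow> real) \<Rightarrow> (nat \<times> nat \<Rightarrow> real) \<Rightarrow> real \<times> real
     \<Rightarrow> nat \<Rightarrow> (('d::finite \<Rightarrow> nat) \<Rightarrow> nat \<times> nat) \<Rightarrow> real" where
  "nuN_const g1 g2 a N \<eta> =
     (if \<eta> \<in> configs N then (\<Prod>x\<in>sites N. nu1 g1 g2 a (\<eta> x)) else 0)"

text \<open>H(mu|nu) = sum_eta mu(eta) log(mu(eta)/nu(eta)) if mu << nu, and +infinity otherwise;
  the sum is taken as (sum of positive parts) - (sum of negative parts) in the extended reals.\<close>
definition rel_entropy :: "'a pmf \<Rightarrow> ('a \<Rightarrow> real) \<Rightarrow> ereal" where
  "rel_entropy \<mu> \<nu> =
     (if \<forall>\<eta>. pmf \<mu> \<eta> > 0 \<longrightarrow> \<nu> \<eta> > 0 then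
        enn2ereal (\<integral>\<^sup>+ \<eta>. ennreal (max 0 (pmf \<mu> \<eta> * ln (pmf \<mu> \<eta> / \<nu> \<eta>))) \<partial>count_space (set_pmf \<mu>))
      - enn2ereal (\<integral>\<^sup>+ \<eta>. ennreal (max 0 (- (pmf \<mu> \<eta> * ln (pmf \<mu> \<eta> / \<nu> \<eta>)))) \<partial>count_space (set_pmf \<mu>))
      else \<infinity>)"

definition torus_profile :: "(real ^ 'd::finite \<Rightarrow> real \<times> real) \<Rightarrow> bool" where
  "torus_profile \<rho> \<longleftrightarrow> continuous_on UNIV \<rho> \<and> (\<forall>x i. \<rho> (x + axis i 1) = \<rho> x)"

definition entropy_local_equilibrium ::
  "(nat \<times> nat \<Rightarrow> real) \<Rightarrow> (nat \<times> nat \<Rightarrow> real) \<Rightarrow> (real ^ 'd \<Rightarrow> real \<times> real)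
     \<Rightarrow> (nat \<Rightarrow> (('d::finite \<Rightarrow> nat) \<Rightarrow> nat \<times> nat) pmf) \<Rightarrow> bool" where
  "entropy_local_equilibrium g1 g2 \<rho> \<mu> \<longleftrightarrow>
     limsup (\<lambda>N. rel_entropy (\<mu> N) (nuN_prof g1 g2 \<rho> N) / ereal (real N ^ CARD('d))) = 0"

end

theory Submission
  imports Defs
begin

text \<open>
  By the entropy inequality, for every \<open>\<gamma> > 0\<close> the entropy \<open>H(\<mu>|\<nu>\<^sub>a)\<close> is at most
  \<open>(1 + 1/\<gamma>) H(\<mu>|\<nu>\<^sub>\<rho>)\<close> plus \<open>1/\<gamma>\<close> times the logarithm of the \<open>\<nu>\<^sub>\<rho>\<close>-expectation of
  \<open>(d\<nu>\<^sub>\<rho> / d\<nu>\<^sub>a)\<^sup>\<gamma>\<close>, up to \<open>O(1/\<gamma>)\<close>. Both measures are products over the \<open>N\<^sup>d\<close> sites, so this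
  exponential moment factorises into single-site moments, which are bounded uniformly in the site
  and in \<open>N\<close> once \<open>\<gamma>\<close> is small: the fugacities \<open>\<Phi>(\<rho>(x/N))\<close> range over a compact subset of the
  interior of \<open>D\<^sub>Z\<close>. Compactness comes from the continuity of \<open>\<Phi> = R\<^sup>-\<^sup>1\<close>, which follows by
  invariance of domain from continuity and injectivity of \<open>R\<close>; injectivity holds because
  \<open>\<Sum>\<^sub>k (p\<^sub>k - q\<^sub>k) (log p\<^sub>k - log q\<^sub>k)\<close> vanishes for two single-site measures with equal densities.
\<close>

section \<open>Single-site grand-canonical measures\<close>

lemma Zterm_zero [simp]: "Zterm g1 g2 \<phi> (0, 0) = 1"
  by (simp add: Zterm_def gfact_def)

lemma nubar1_eq_0_fst: "fst \<phi> = 0 \<Longrightarrow> fst k \<noteq> 0 \<Longrightarrow> nubar1 g1 g2 \<phi> k = 0"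
  by (simp add: nubar1_def Zterm_def)

lemma nubar1_eq_0_snd: "snd \<phi> = 0 \<Longrightarrow> snd k \<noteq> 0 \<Longrightarrow> nubar1 g1 g2 \<phi> k = 0"
  by (simp add: nubar1_def Zterm_def)

lemma Rfun_fst_eq_0: "fst \<phi> = 0 \<Longrightarrow> fst (Rfun g1 g2 \<phi>) = 0"
  unfolding Rfun_def fst_conv by (intro infsum_0) (metis mult_eq_0_iff of_nat_eq_0_iff nubar1_eq_0_fst)

lemma Rfun_snd_eq_0: "snd \<phi> = 0 \<Longrightarrow> snd (Rfun g1 g2 \<phi>) = 0"
  unfolding Rfun_def snd_conv by (intro infsum_0) (metis mult_eq_0_iff of_nat_eq_0_iff nubar1_eq_0_snd)

lemma Rfun_has_sum:
  assumes "\<phi> \<in> DR g1 g2"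
  shows "((\<lambda>k. real (fst k) * nubar1 g1 g2 \<phi> k) has_sum fst (Rfun g1 g2 \<phi>)) UNIV"
    and "((\<lambda>k. real (snd k) * nubar1 g1 g2 \<phi> k) has_sum snd (Rfun g1 g2 \<phi>)) UNIV"
  using assms by (auto simp: DR_def Rfun_def)

lemma DR_DZ: "\<phi> \<in> DR g1 g2 \<Longrightarrow> \<phi> \<in> DZ g1 g2"
  by (simp add: DR_def)

lemma DZ_Rplus2: "\<phi> \<in> DZ g1 g2 \<Longrightarrow> \<phi> \<in> Rplus2"
  by (simp add: DZ_def)

lemma DR_int_DR: "\<phi> \<in> DR_int g1 g2 \<Longrightarrow> \<phi> \<in> DR g1 g2"
  by (auto simp: DR_int_def)

lemma diff_mult_ln_diff_nonneg:
  fixes x y :: real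
  assumes "0 < x" "0 < y"
  shows "0 \<le> (x - y) * (ln x - ln y)"
  using assms by (cases "x \<le> y") (auto intro: mult_nonpos_nonpos mult_nonneg_nonneg)

lemma diff_mult_ln_diff_eq_0_iff:
  fixes x y :: real
  assumes "0 < x" "0 < y"
  shows "(x - y) * (ln x - ln y) = 0 \<longleftrightarrow> x = y"
  using assms by auto

locale two_species_rate =
  fixes g1 g2 :: "nat \<times> nat \<Rightarrow> real"
  assumes rate: "local_jump_rate g1 g2"
begin

lemma g1_pos: "0 < fst k \<Longrightarrow> 0 < g1 k"
  using rate unfolding local_jump_rate_def by (metis less_le not_gr0)

lemma g2_pos: "0 < snd k \<Longrightarrow> 0 < g2 k"
  using rate unfolding local_jump_rate_def by (metis less_le not_gr0)

lemma gfact_pos: "0 < gfact g1 g2 k"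
  unfolding gfact_def by (intro mult_pos_pos prod_pos) (auto intro!: g1_pos g2_pos)

lemma gfact_neq_0: "gfact g1 g2 k \<noteq> 0"
  using gfact_pos[of k] by simp

lemma Zterm_nonneg: "\<phi> \<in> Rplus2 \<Longrightarrow> 0 \<le> Zterm g1 g2 \<phi> k"
  using gfact_pos[of k] by (auto simp: Zterm_def Rplus2_def)

lemma Zterm_mono:
  assumes "0 \<le> fst \<psi>" "fst \<psi> \<le> fst \<phi>" "0 \<le> snd \<psi>" "snd \<psi> \<le> snd \<phi>"
  shows "Zterm g1 g2 \<psi> k \<le> Zterm g1 g2 \<phi> k"
  unfolding Zterm_def using gfact_pos[of k] assms
  by (intro divide_right_mono mult_mono power_mono) auto

lemma Zterm_scaleR: "Zterm g1 g2 (s *\<^sub>R \<phi>) k = s ^ (fst k + snd k) * Zterm g1 g2 \<phi> k"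
  by (simp add: Zterm_def power_mult_distrib power_add field_simps)

lemma Zfun_has_sum: "\<phi> \<in> DZ g1 g2 \<Longrightarrow> (Zterm g1 g2 \<phi> has_sum Zfun g1 g2 \<phi>) UNIV"
  by (auto simp: DZ_def Zfun_def)

lemma Zterm_le_Zfun:
  assumes "\<phi> \<in> DZ g1 g2"
  shows "Zterm g1 g2 \<phi> k \<le> Zfun g1 g2 \<phi>"
proof -
  have "infsum (Zterm g1 g2 \<phi>) {k} \<le> infsum (Zterm g1 g2 \<phi>) UNIV"
    using assms by (intro infsum_mono_neutral) (auto simp: DZ_def Zterm_nonneg)
  then show ?thesis by (simp add: Zfun_def)
qed

lemma Zfun_ge_1: "\<phi> \<in> DZ g1 g2 \<Longrightarrow> 1 \<le> Zfun g1 g2 \<phi>"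
  using Zterm_le_Zfun[of \<phi> "(0, 0)"] by simp

lemma
  assumes "\<phi> \<in> DZ g1 g2" "0 \<le> fst \<psi>" "fst \<psi> \<le> fst \<phi>" "0 \<le> snd \<psi>" "snd \<psi> \<le> snd \<phi>"
  shows DZ_mono: "\<psi> \<in> DZ g1 g2"
    and Zfun_mono: "Zfun g1 g2 \<psi> \<le> Zfun g1 g2 \<phi>"
proof -
  have sum\<phi>: "Zterm g1 g2 \<phi> summable_on UNIV" using assms(1) by (simp add: DZ_def)
  have "\<psi> \<in> Rplus2" using assms by (simp add: Rplus2_def)
  moreover have sum\<psi>: "Zterm g1 g2 \<psi> summable_on UNIV"
    by (rule summable_on_comparison_test[OF sum\<phi>])
      (use assms \<open>\<psi> \<in> Rplus2\<close> in \<open>auto intro: Zterm_mono Zterm_nonneg\<close>)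
  ultimately show "\<psi> \<in> DZ g1 g2" by (simp add: DZ_def)
  show "Zfun g1 g2 \<psi> \<le> Zfun g1 g2 \<phi>"
    unfolding Zfun_def by (rule infsum_mono[OF sum\<psi> sum\<phi>]) (use assms in \<open>auto intro: Zterm_mono\<close>)
qed

lemma fst_le_Zfun: "\<phi> \<in> DZ g1 g2 \<Longrightarrow> fst \<phi> \<le> g1 (1, 0) * Zfun g1 g2 \<phi>"
  using Zterm_le_Zfun[of \<phi> "(1, 0)"] g1_pos[of "(1, 0)"]
  by (simp add: Zterm_def gfact_def divide_le_eq mult.commute)

lemma snd_le_Zfun: "\<phi> \<in> DZ g1 g2 \<Longrightarrow> snd \<phi> \<le> g2 (0, 1) * Zfun g1 g2 \<phi>"
  using Zterm_le_Zfun[of \<phi> "(0, 1)"] g2_pos[of "(0, 1)"]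
  by (simp add: Zterm_def gfact_def divide_le_eq mult.commute)

lemma nubar1_nonneg: "\<phi> \<in> Rplus2 \<Longrightarrow> 0 \<le> nubar1 g1 g2 \<phi> k"
  unfolding nubar1_def Zfun_def
  by (intro divide_nonneg_nonneg Zterm_nonneg infsum_nonneg) (auto simp: Zterm_nonneg)

lemma nubar1_le_Zterm: "\<phi> \<in> DZ g1 g2 \<Longrightarrow> nubar1 g1 g2 \<phi> k \<le> Zterm g1 g2 \<phi> k"
  using Zfun_ge_1[of \<phi>] Zterm_nonneg[of \<phi> k] DZ_Rplus2[of \<phi>]
  by (simp add: nubar1_def divide_le_eq mult_le_cancel_left1)

lemma nubar1_has_sum: "\<phi> \<in> DZ g1 g2 \<Longrightarrow> (nubar1 g1 g2 \<phi> has_sum 1) UNIV"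
  using has_sum_divide_const[OF Zfun_has_sum, of \<phi> "Zfun g1 g2 \<phi>"] Zfun_ge_1[of \<phi>]
  by (simp add: nubar1_def[abs_def])

lemma nubar1_pos:
  assumes "\<phi> \<in> DZ g1 g2" "fst \<phi> = 0 \<longrightarrow> fst k = 0" "snd \<phi> = 0 \<longrightarrow> snd k = 0"
  shows "0 < nubar1 g1 g2 \<phi> k"
proof -
  have "fst \<phi> \<ge> 0" "snd \<phi> \<ge> 0" using assms(1) DZ_Rplus2 by (auto simp: Rplus2_def)
  then have "0 < fst \<phi> ^ fst k" "0 < snd \<phi> ^ snd k"
    using assms(2,3) by (auto simp: order_le_less)
  then show ?thesis using gfact_pos[of k] Zfun_ge_1[OF assms(1)]
    by (simp add: nubar1_def Zterm_def)
qed

lemma ln_nubar1: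
  assumes "\<phi> \<in> DZ g1 g2" "fst \<phi> = 0 \<longrightarrow> fst k = 0" "snd \<phi> = 0 \<longrightarrow> snd k = 0"
  shows "ln (nubar1 g1 g2 \<phi> k) = real (fst k) * ln (fst \<phi>) + real (snd k) * ln (snd \<phi>)
            - ln (gfact g1 g2 k) - ln (Zfun g1 g2 \<phi>)"
proof -
  have ln_quot: "ln (A * B / C / D) = ln A + ln B - ln C - ln D"
    if "0 < A" "0 < B" "0 < C" "0 < D" for A B C D :: real
    using that by (simp add: ln_div ln_mult)
  have "fst \<phi> \<ge> 0" "snd \<phi> \<ge> 0" using DZ_Rplus2[OF assms(1)] by (auto simp: Rplus2_def)
  then have "0 < fst \<phi> ^ fst k" "ln (fst \<phi> ^ fst k) = real (fst k) * ln (fst \<phi>)"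
    and "0 < snd \<phi> ^ snd k" "ln (snd \<phi> ^ snd k) = real (snd k) * ln (snd \<phi>)"
    using assms(2,3) by (auto simp: order_le_less ln_realpow)
  then show ?thesis
    unfolding nubar1_def Zterm_def
    using ln_quot[of "fst \<phi> ^ fst k" "snd \<phi> ^ snd k" "gfact g1 g2 k" "Zfun g1 g2 \<phi>"]
      gfact_pos[of k] Zfun_ge_1[OF assms(1)] by simp
qed

lemma Rfun_nonneg:
  assumes "\<phi> \<in> Rplus2"
  shows "0 \<le> fst (Rfun g1 g2 \<phi>)" "0 \<le> snd (Rfun g1 g2 \<phi>)"
  using assms by (auto simp: Rfun_def intro!: infsum_nonneg mult_nonneg_nonneg nubar1_nonneg)

lemma Rfun_fst_pos:
  assumes "\<phi> \<in> DR g1 g2" "0 < fst \<phi>"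
  shows "0 < fst (Rfun g1 g2 \<phi>)"
proof -
  have dz: "\<phi> \<in> DZ g1 g2" using assms(1) by (rule DR_DZ)
  then have "\<phi> \<in> Rplus2" by (rule DZ_Rplus2)
  have "0 < nubar1 g1 g2 \<phi> (1, 0)" using dz assms(2) by (intro nubar1_pos) auto
  also have "\<dots> \<le> fst (Rfun g1 g2 \<phi>)"
    using finite_sum_le_has_sum[OF Rfun_has_sum(1)[OF assms(1)], of "{(1, 0)}"] \<open>\<phi> \<in> Rplus2\<close>
    by (simp add: nubar1_nonneg)
  finally show ?thesis .
qed

lemma Rfun_snd_pos:
  assumes "\<phi> \<in> DR g1 g2" "0 < snd \<phi>"
  shows "0 < snd (Rfun g1 g2 \<phi>)"
proof -
  have dz: "\<phi> \<in> DZ g1 g2" using assms(1) by (rule DR_DZ)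
  then have "\<phi> \<in> Rplus2" by (rule DZ_Rplus2)
  have "0 < nubar1 g1 g2 \<phi> (0, 1)" using dz assms(2) by (intro nubar1_pos) auto
  also have "\<dots> \<le> snd (Rfun g1 g2 \<phi>)"
    using finite_sum_le_has_sum[OF Rfun_has_sum(2)[OF assms(1)], of "{(0, 1)}"] \<open>\<phi> \<in> Rplus2\<close>
    by (simp add: nubar1_nonneg)
  finally show ?thesis .
qed

lemma Rfun_eq_0_iff:
  assumes "\<phi> \<in> DR g1 g2"
  shows "fst (Rfun g1 g2 \<phi>) = 0 \<longleftrightarrow> fst \<phi> = 0" "snd (Rfun g1 g2 \<phi>) = 0 \<longleftrightarrow> snd \<phi> = 0"
proof -
  have "fst \<phi> \<ge> 0" "snd \<phi> \<ge> 0" using DZ_Rplus2[OF DR_DZ[OF assms]] by (auto simp: Rplus2_def)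
  then show "fst (Rfun g1 g2 \<phi>) = 0 \<longleftrightarrow> fst \<phi> = 0" "snd (Rfun g1 g2 \<phi>) = 0 \<longleftrightarrow> snd \<phi> = 0"
    using Rfun_fst_pos[OF assms] Rfun_snd_pos[OF assms] Rfun_fst_eq_0[of \<phi>] Rfun_snd_eq_0[of \<phi>]
    by force+
qed

lemma nubar1_log_ratio:
  assumes \<phi>: "\<phi> \<in> DZ g1 g2" and \<psi>: "\<psi> \<in> DZ g1 g2"
    and zero_iff: "fst \<phi> = 0 \<longleftrightarrow> fst \<psi> = 0" "snd \<phi> = 0 \<longleftrightarrow> snd \<psi> = 0"
  shows "0 < nubar1 g1 g2 \<phi> k \<and> 0 < nubar1 g1 g2 \<psi> k \<and>
      ln (nubar1 g1 g2 \<phi> k) - ln (nubar1 g1 g2 \<psi> k) = real (fst k) * (ln (fst \<phi>) - ln (fst \<psi>))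
        + real (snd k) * (ln (snd \<phi>) - ln (snd \<psi>)) - (ln (Zfun g1 g2 \<phi>) - ln (Zfun g1 g2 \<psi>))
    \<or> nubar1 g1 g2 \<phi> k = 0 \<and> nubar1 g1 g2 \<psi> k = 0"
proof (cases "(fst \<phi> = 0 \<longrightarrow> fst k = 0) \<and> (snd \<phi> = 0 \<longrightarrow> snd k = 0)")
  case True
  then show ?thesis
    using nubar1_pos[OF \<phi>, of k] nubar1_pos[OF \<psi>, of k] ln_nubar1[OF \<phi>, of k] ln_nubar1[OF \<psi>, of k] zero_iff
    by (simp add: algebra_simps)
next
  case False
  then show ?thesis using zero_iff by (auto simp: nubar1_eq_0_fst nubar1_eq_0_snd)
qed

lemma nubar1_eq_if_Rfun_eq:
  assumes \<phi>: "\<phi> \<in> DR g1 g2" and \<psi>: "\<psi> \<in> DR g1 g2" and eq: "Rfun g1 g2 \<phi> = Rfun g1 g2 \<psi>"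
  shows "nubar1 g1 g2 \<phi> = nubar1 g1 g2 \<psi>"
proof
  fix k
  define p where "p = nubar1 g1 g2 \<phi>"
  define q where "q = nubar1 g1 g2 \<psi>"
  define v1 where "v1 = ln (fst \<phi>) - ln (fst \<psi>)"
  define v2 where "v2 = ln (snd \<phi>) - ln (snd \<psi>)"
  define c where "c = ln (Zfun g1 g2 \<phi>) - ln (Zfun g1 g2 \<psi>)"
  have dz: "\<phi> \<in> DZ g1 g2" "\<psi> \<in> DZ g1 g2" using \<phi> \<psi> by (auto intro: DR_DZ)
  have "fst \<phi> = 0 \<longleftrightarrow> fst \<psi> = 0" "snd \<phi> = 0 \<longleftrightarrow> snd \<psi> = 0"
    using Rfun_eq_0_iff[OF \<phi>] Rfun_eq_0_iff[OF \<psi>] eq by auto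
  from nubar1_log_ratio[OF dz this]
  have cases: "0 < p j \<and> 0 < q j \<and> ln (p j) - ln (q j) = real (fst j) * v1 + real (snd j) * v2 - c
      \<or> p j = 0 \<and> q j = 0" for j
    by (simp add: p_def q_def v1_def v2_def c_def)
  \<comment> \<open>On the common support \<open>ln p - ln q\<close> is affine in \<open>k\<close>, and \<open>p\<close>, \<open>q\<close> have equal masses and means.\<close>
  have affine: "(p j - q j) * (ln (p j) - ln (q j)) =
      v1 * (real (fst j) * p j - real (fst j) * q j) + v2 * (real (snd j) * p j - real (snd j) * q j)
      + (- c) * (p j - q j)" for j
  proof -
    have "(p j - q j) * (ln (p j) - ln (q j)) = (p j - q j) * (real (fst j) * v1 + real (snd j) * v2 - c)"
      using cases[of j] by (metis diff_self mult_zero_left)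
    then show ?thesis by (simp add: algebra_simps)
  qed
  have mean1: "((\<lambda>j. real (fst j) * p j - real (fst j) * q j) has_sum 0) UNIV"
    using has_sum_add[OF Rfun_has_sum(1)[OF \<phi>] has_sum_uminusI[OF Rfun_has_sum(1)[OF \<psi>]]] eq
    by (simp add: p_def q_def)
  have mean2: "((\<lambda>j. real (snd j) * p j - real (snd j) * q j) has_sum 0) UNIV"
    using has_sum_add[OF Rfun_has_sum(2)[OF \<phi>] has_sum_uminusI[OF Rfun_has_sum(2)[OF \<psi>]]] eq
    by (simp add: p_def q_def)
  have mass: "((\<lambda>j. p j - q j) has_sum 0) UNIV"
    using has_sum_add[OF nubar1_has_sum[OF dz(1)] has_sum_uminusI[OF nubar1_has_sum[OF dz(2)]]]
    by (simp add: p_def q_def)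
  have "((\<lambda>j. (p j - q j) * (ln (p j) - ln (q j))) has_sum 0) UNIV"
    unfolding affine
    using has_sum_add[OF has_sum_add[OF has_sum_cmult_right[OF mean1, of v1]
        has_sum_cmult_right[OF mean2, of v2]] has_sum_cmult_right[OF mass, of "- c"]]
    by simp
  moreover have "0 \<le> (p j - q j) * (ln (p j) - ln (q j))" for j
    using cases[of j] diff_mult_ln_diff_nonneg by auto
  ultimately have "(p k - q k) * (ln (p k) - ln (q k)) = 0"
    using nonneg_has_sum_le_0D[where f = "\<lambda>j. (p j - q j) * (ln (p j) - ln (q j))" and a = 0 and x = k] by simp
  then show "p k = q k"
    using cases[of k] diff_mult_ln_diff_eq_0_iff by auto
qed

lemma nubar1_inj:
  assumes "\<phi> \<in> DZ g1 g2" "\<psi> \<in> DZ g1 g2" "nubar1 g1 g2 \<phi> = nubar1 g1 g2 \<psi>"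
  shows "\<phi> = \<psi>"
proof -
  have Z: "Zfun g1 g2 \<phi> = Zfun g1 g2 \<psi>"
    using fun_cong[OF assms(3), of "(0, 0)"] Zfun_ge_1[OF assms(1)] Zfun_ge_1[OF assms(2)]
    by (simp add: nubar1_def)
  have "fst \<phi> = fst \<psi>"
    using fun_cong[OF assms(3), of "(1, 0)"] Z Zfun_ge_1[OF assms(1)] g1_pos[of "(1, 0)"]
    by (simp add: nubar1_def Zterm_def gfact_def)
  moreover have "snd \<phi> = snd \<psi>"
    using fun_cong[OF assms(3), of "(0, 1)"] Z Zfun_ge_1[OF assms(1)] g2_pos[of "(0, 1)"]
    by (simp add: nubar1_def Zterm_def gfact_def)
  ultimately show ?thesis by (simp add: prod_eq_iff)
qed

lemma inj_on_Rfun: "inj_on (Rfun g1 g2) (DR g1 g2)"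
  by (rule inj_onI) (meson DR_DZ nubar1_inj nubar1_eq_if_Rfun_eq)

lemma Phi_Rfun: "\<phi> \<in> DR g1 g2 \<Longrightarrow> Phi g1 g2 (Rfun g1 g2 \<phi>) = \<phi>"
  unfolding Phi_def by (rule the_equality) (auto dest: inj_onD[OF inj_on_Rfun])

lemma Phi_Rfun_image:
  assumes "\<rho>0 \<in> Rfun g1 g2 ` DR_int g1 g2"
  shows "Phi g1 g2 \<rho>0 \<in> DR g1 g2" "Rfun g1 g2 (Phi g1 g2 \<rho>0) = \<rho>0"
  using assms Phi_Rfun DR_int_DR by auto

lemma Phi_pos:
  assumes "a \<in> Rfun g1 g2 ` DR_int g1 g2" "0 < fst a" "0 < snd a"
  shows "0 < fst (Phi g1 g2 a)" "0 < snd (Phi g1 g2 a)"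
proof -
  note \<phi> = Phi_Rfun_image[OF assms(1)]
  have "0 \<le> fst (Phi g1 g2 a)" "0 \<le> snd (Phi g1 g2 a)"
    using DZ_Rplus2[OF DR_DZ[OF \<phi>(1)]] by (auto simp: Rplus2_def)
  then show "0 < fst (Phi g1 g2 a)" "0 < snd (Phi g1 g2 a)"
    using assms(2,3) Rfun_eq_0_iff[OF \<phi>(1)] \<phi>(2) by auto
qed

lemma Rfun_DR_int_pos:
  assumes "\<phi>0 \<in> DR_int g1 g2"
  shows "\<exists>a \<in> Rfun g1 g2 ` DR_int g1 g2. 0 < fst a \<and> 0 < snd a"
proof -
  obtain U where U: "open U" "\<phi>0 \<in> U" "U \<inter> Rplus2 \<subseteq> DR g1 g2" and \<phi>0: "\<phi>0 \<in> Rplus2"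
    using assms unfolding DR_int_def by blast
  obtain e where e: "0 < e" "ball \<phi>0 e \<subseteq> U" using U(1,2) open_contains_ball by blast
  define \<phi> where "\<phi> = (fst \<phi>0 + e / 4, snd \<phi>0 + e / 4)"
  have "dist \<phi>0 \<phi> \<le> e / 4 + e / 4"
    using sqrt_sum_squares_le_sum_abs[of "e / 4" "e / 4"] e(1)
    by (cases \<phi>0) (simp add: \<phi>_def dist_Pair_Pair dist_real_def)
  then have "\<phi> \<in> U" using e by auto
  moreover have "\<phi> \<in> Rplus2" "0 < fst \<phi>" "0 < snd \<phi>" using \<phi>0 e(1) by (auto simp: \<phi>_def Rplus2_def)
  ultimately have "\<phi> \<in> DR_int g1 g2" using U unfolding DR_int_def by blast
  then show ?thesis
    using Rfun_fst_pos[OF DR_int_DR] Rfun_snd_pos[OF DR_int_DR] \<open>0 < fst \<phi>\<close> \<open>0 < snd \<phi>\<close> by blast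
qed

end

section \<open>Continuity of the inverse density map\<close>

lemma continuous_on_infsum_dominated:
  fixes f :: "'a::topological_space \<Rightarrow> 'k \<Rightarrow> real"
  assumes h: "h summable_on UNIV" and bound: "\<And>x k. x \<in> S \<Longrightarrow> \<bar>f x k\<bar> \<le> h k"
    and cont: "\<And>k. continuous_on S (\<lambda>x. f x k)"
  shows "continuous_on S (\<lambda>x. infsum (f x) UNIV)"
proof (rule uniform_limit_theorem)
  show "\<forall>\<^sub>F X in finite_subsets_at_top UNIV. continuous_on S (\<lambda>x. \<Sum>k\<in>X. f x k)"
    by (intro always_eventually allI continuous_on_sum cont)
  show "uniform_limit S (\<lambda>X x. \<Sum>k\<in>X. f x k) (\<lambda>x. infsum (f x) UNIV) (finite_subsets_at_top UNIV)"
    using Weierstrass_m_test_general[of UNIV S "\<lambda>k x. f x k" h] h bound by simp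
  show "\<not> trivial_limit (finite_subsets_at_top (UNIV :: 'k set))"
    by (simp add: finite_subsets_at_top_neq_bot)
qed

lemma of_nat_mult_odd_power:
  fixes a :: real
  shows "real n * (a * \<bar>a\<bar> ^ (n - 1)) = sgn a * (real n * \<bar>a\<bar> ^ n)"
proof (cases n)
  case (Suc m)
  have "a * \<bar>a\<bar> ^ m = sgn a * \<bar>a\<bar> ^ Suc m" by (metis mult.assoc mult_sgn_abs power_Suc)
  then show ?thesis using Suc by simp
qed simp

lemma abs_of_nat_mult_odd_power:
  fixes a :: real
  shows "\<bar>real n * (a * \<bar>a\<bar> ^ (n - 1))\<bar> = real n * \<bar>a\<bar> ^ n"
  by (cases n) (simp_all add: abs_mult power_abs)

lemma Rfun_moment_quotient:
  "fst (Rfun g1 g2 \<phi>) = infsum (\<lambda>k. real (fst k) * Zterm g1 g2 \<phi> k) UNIV / Zfun g1 g2 \<phi>"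
  "snd (Rfun g1 g2 \<phi>) = infsum (\<lambda>k. real (snd k) * Zterm g1 g2 \<phi> k) UNIV / Zfun g1 g2 \<phi>"
proof -
  have "(\<lambda>k. real (fst k) * nubar1 g1 g2 \<phi> k) = (\<lambda>k. real (fst k) * Zterm g1 g2 \<phi> k * inverse (Zfun g1 g2 \<phi>))"
    "(\<lambda>k. real (snd k) * nubar1 g1 g2 \<phi> k) = (\<lambda>k. real (snd k) * Zterm g1 g2 \<phi> k * inverse (Zfun g1 g2 \<phi>))"
    by (simp_all add: nubar1_def divide_inverse mult.assoc)
  then show "fst (Rfun g1 g2 \<phi>) = infsum (\<lambda>k. real (fst k) * Zterm g1 g2 \<phi> k) UNIV / Zfun g1 g2 \<phi>"
    "snd (Rfun g1 g2 \<phi>) = infsum (\<lambda>k. real (snd k) * Zterm g1 g2 \<phi> k) UNIV / Zfun g1 g2 \<phi>"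
    by (simp_all add: Rfun_def infsum_cmult_left' divide_inverse)
qed

context two_species_rate
begin

lemma Rfun_moment_summable:
  assumes "\<phi> \<in> DR g1 g2"
  shows "(\<lambda>k. real (fst k) * Zterm g1 g2 \<phi> k) summable_on UNIV"
    and "(\<lambda>k. real (snd k) * Zterm g1 g2 \<phi> k) summable_on UNIV"
proof -
  have "(\<lambda>k. real (fst k) * nubar1 g1 g2 \<phi> k * Zfun g1 g2 \<phi>) summable_on UNIV"
    "(\<lambda>k. real (snd k) * nubar1 g1 g2 \<phi> k * Zfun g1 g2 \<phi>) summable_on UNIV"
    using assms by (auto intro: summable_on_cmult_left simp: DR_def)
  moreover have "Zfun g1 g2 \<phi> > 0" using Zfun_ge_1[OF DR_DZ[OF assms]] by simp
  ultimately show "(\<lambda>k. real (fst k) * Zterm g1 g2 \<phi> k) summable_on UNIV"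
    "(\<lambda>k. real (snd k) * Zterm g1 g2 \<phi> k) summable_on UNIV"
    by (simp_all add: nubar1_def)
qed

text \<open>The odd extension of \<open>R\<close> in each coordinate: a continuous injective map on open subsets
  of \<open>\<real>\<^sup>2\<close>, so that invariance of domain applies also at the boundary of \<open>\<real>\<^sub>+\<^sup>2\<close>.\<close>
definition Rsym :: "real \<times> real \<Rightarrow> real \<times> real" where
  "Rsym x = (sgn (fst x) * fst (Rfun g1 g2 (map_prod abs abs x)),
             sgn (snd x) * snd (Rfun g1 g2 (map_prod abs abs x)))"

lemma Rsym_eq_Rfun:
  assumes "\<phi> \<in> Rplus2"
  shows "Rsym \<phi> = Rfun g1 g2 \<phi>"
proof -
  have "map_prod abs abs \<phi> = \<phi>" using assms by (cases \<phi>) (simp add: Rplus2_def)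
  moreover have "sgn (fst \<phi>) * fst (Rfun g1 g2 \<phi>) = fst (Rfun g1 g2 \<phi>)"
    using assms Rfun_fst_eq_0[of \<phi> g1 g2] by (cases "fst \<phi> = 0") (auto simp: Rplus2_def)
  moreover have "sgn (snd \<phi>) * snd (Rfun g1 g2 \<phi>) = snd (Rfun g1 g2 \<phi>)"
    using assms Rfun_snd_eq_0[of \<phi> g1 g2] by (cases "snd \<phi> = 0") (auto simp: Rplus2_def)
  ultimately show ?thesis unfolding Rsym_def by (metis prod.collapse)
qed

lemma abs_Rsym: "map_prod abs abs (Rsym x) = Rfun g1 g2 (map_prod abs abs x)"
proof -
  define y where "y = map_prod abs abs x"
  have y: "y \<in> Rplus2" "fst y = \<bar>fst x\<bar>" "snd y = \<bar>snd x\<bar>" by (simp_all add: y_def Rplus2_def)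
  have "\<bar>sgn (fst x) * fst (Rfun g1 g2 y)\<bar> = fst (Rfun g1 g2 y)"
    using Rfun_nonneg(1)[OF y(1)] Rfun_fst_eq_0[of y g1 g2] y(2) by (auto simp: abs_mult sgn_if)
  moreover have "\<bar>sgn (snd x) * snd (Rfun g1 g2 y)\<bar> = snd (Rfun g1 g2 y)"
    using Rfun_nonneg(2)[OF y(1)] Rfun_snd_eq_0[of y g1 g2] y(3) by (auto simp: abs_mult sgn_if)
  ultimately show ?thesis by (simp add: Rsym_def y_def)
qed

lemma inj_on_Rsym: "inj_on Rsym {x. map_prod abs abs x \<in> DR g1 g2}"
proof (rule inj_onI)
  fix x y assume x: "x \<in> {x. map_prod abs abs x \<in> DR g1 g2}" and y: "y \<in> {x. map_prod abs abs x \<in> DR g1 g2}"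
    and eq: "Rsym x = Rsym y"
  have abs_eq: "map_prod abs abs x = map_prod abs abs y"
    using abs_Rsym[of x] abs_Rsym[of y] eq inj_onD[OF inj_on_Rfun] x y by (metis mem_Collect_eq)
  then have abs_fst: "\<bar>fst x\<bar> = \<bar>fst y\<bar>" and abs_snd: "\<bar>snd x\<bar> = \<bar>snd y\<bar>" by (simp_all add: prod_eq_iff)
  define z where "z = map_prod abs abs x"
  have z: "z \<in> DR g1 g2" "fst z = \<bar>fst x\<bar>" "snd z = \<bar>snd x\<bar>" using x by (simp_all add: z_def)
  have "sgn (fst x) * fst (Rfun g1 g2 z) = sgn (fst y) * fst (Rfun g1 g2 z)"
    "sgn (snd x) * snd (Rfun g1 g2 z) = sgn (snd y) * snd (Rfun g1 g2 z)"
    using eq abs_eq by (simp_all add: Rsym_def z_def)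
  then have "fst x = fst y" "snd x = snd y"
    using Rfun_eq_0_iff[OF z(1)] z(2,3) abs_fst abs_snd by (metis abs_0_eq mult_cancel_right mult_sgn_abs)+
  then show "x = y" by (simp add: prod_eq_iff)
qed

text \<open>Since \<open>x \<bar>x\<bar> ^ (k - 1)\<close> is the odd extension of \<open>t ^ k\<close>, these series are the numerators of
  \<open>Rsym\<close> with every term continuous on all of \<open>\<real>\<^sup>2\<close>.\<close>
definition Rsym_num1 :: "real \<times> real \<Rightarrow> real" where
  "Rsym_num1 x = (\<Sum>\<^sub>\<infinity>k. real (fst k) * (fst x * \<bar>fst x\<bar> ^ (fst k - 1)) * \<bar>snd x\<bar> ^ snd k / gfact g1 g2 k)"

definition Rsym_num2 :: "real \<times> real \<Rightarrow> real" where
  "Rsym_num2 x = (\<Sum>\<^sub>\<infinity>k. real (snd k) * (snd x * \<bar>snd x\<bar> ^ (snd k - 1)) * \<bar>fst x\<bar> ^ fst k / gfact g1 g2 k)"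

lemma Rsym_eq_quotient:
  "Rsym x = (Rsym_num1 x / Zfun g1 g2 (map_prod abs abs x), Rsym_num2 x / Zfun g1 g2 (map_prod abs abs x))"
proof -
  have "Rsym_num1 x = sgn (fst x) * infsum (\<lambda>k. real (fst k) * Zterm g1 g2 (map_prod abs abs x) k) UNIV"
    unfolding Rsym_num1_def infsum_cmult_right'[symmetric]
    by (intro infsum_cong) (simp only: of_nat_mult_odd_power, simp add: Zterm_def mult_ac)
  moreover have "Rsym_num2 x = sgn (snd x) * infsum (\<lambda>k. real (snd k) * Zterm g1 g2 (map_prod abs abs x) k) UNIV"
    unfolding Rsym_num2_def infsum_cmult_right'[symmetric]
    by (intro infsum_cong) (simp only: of_nat_mult_odd_power, simp add: Zterm_def mult_ac)
  ultimately show ?thesis by (simp add: Rsym_def Rfun_moment_quotient)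
qed

lemma abs_power_le_dominant:
  assumes "\<bar>fst x\<bar> \<le> fst \<phi>'" "\<bar>snd x\<bar> \<le> snd \<phi>'"
  shows "\<bar>fst x\<bar> ^ fst k * \<bar>snd x\<bar> ^ snd k / gfact g1 g2 k \<le> Zterm g1 g2 \<phi>' k"
  using assms gfact_pos[of k] by (auto simp: Zterm_def intro!: divide_right_mono mult_mono power_mono)

lemma continuous_on_Zfun_abs:
  assumes "\<phi>' \<in> DZ g1 g2" and bound: "\<And>x. x \<in> \<Omega> \<Longrightarrow> \<bar>fst x\<bar> \<le> fst \<phi>' \<and> \<bar>snd x\<bar> \<le> snd \<phi>'"
  shows "continuous_on \<Omega> (\<lambda>x. Zfun g1 g2 (map_prod abs abs x))"
proof -
  have "continuous_on \<Omega> (\<lambda>x. \<Sum>\<^sub>\<infinity>k. \<bar>fst x\<bar> ^ fst k * \<bar>snd x\<bar> ^ snd k / gfact g1 g2 k)"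
  proof (rule continuous_on_infsum_dominated[where h = "Zterm g1 g2 \<phi>'"])
    show "Zterm g1 g2 \<phi>' summable_on UNIV" using assms(1) by (simp add: DZ_def)
    show "\<bar>\<bar>fst x\<bar> ^ fst k * \<bar>snd x\<bar> ^ snd k / gfact g1 g2 k\<bar> \<le> Zterm g1 g2 \<phi>' k" if "x \<in> \<Omega>" for x k
      using abs_power_le_dominant[of x \<phi>' k] bound[OF that] gfact_pos[of k] by simp
  qed (auto intro!: continuous_intros simp: gfact_neq_0)
  then show ?thesis by (simp add: Zfun_def Zterm_def)
qed

lemma continuous_on_Rsym_num:
  assumes \<phi>': "\<phi>' \<in> DR g1 g2" and bound: "\<And>x. x \<in> \<Omega> \<Longrightarrow> \<bar>fst x\<bar> \<le> fst \<phi>' \<and> \<bar>snd x\<bar> \<le> snd \<phi>'"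
  shows "continuous_on \<Omega> Rsym_num1" "continuous_on \<Omega> Rsym_num2"
proof -
  have dom: "real i * (\<bar>fst x\<bar> ^ fst k * \<bar>snd x\<bar> ^ snd k / gfact g1 g2 k) \<le> real i * Zterm g1 g2 \<phi>' k"
    if "x \<in> \<Omega>" for x k i
    using abs_power_le_dominant[of x \<phi>' k] bound[OF that] by (intro mult_left_mono) auto
  show "continuous_on \<Omega> Rsym_num1" unfolding Rsym_num1_def
  proof (rule continuous_on_infsum_dominated[where h = "\<lambda>k. real (fst k) * Zterm g1 g2 \<phi>' k"])
    show "(\<lambda>k. real (fst k) * Zterm g1 g2 \<phi>' k) summable_on UNIV" by (rule Rfun_moment_summable(1)[OF \<phi>'])
    show "\<bar>real (fst k) * (fst x * \<bar>fst x\<bar> ^ (fst k - 1)) * \<bar>snd x\<bar> ^ snd k / gfact g1 g2 k\<bar>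
        \<le> real (fst k) * Zterm g1 g2 \<phi>' k" if "x \<in> \<Omega>" for x k
    proof -
      have "\<bar>real (fst k) * (fst x * \<bar>fst x\<bar> ^ (fst k - 1)) * \<bar>snd x\<bar> ^ snd k / gfact g1 g2 k\<bar>
          = \<bar>real (fst k) * (fst x * \<bar>fst x\<bar> ^ (fst k - 1))\<bar> * (\<bar>snd x\<bar> ^ snd k / gfact g1 g2 k)"
        using gfact_pos[of k] by (simp add: abs_mult)
      also have "\<dots> = real (fst k) * (\<bar>fst x\<bar> ^ fst k * \<bar>snd x\<bar> ^ snd k / gfact g1 g2 k)"
        by (simp only: abs_of_nat_mult_odd_power) (simp add: mult_ac)
      finally show ?thesis using dom[OF that, of "fst k" k] by simp
    qed
  qed (auto intro!: continuous_intros simp: gfact_neq_0)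
  show "continuous_on \<Omega> Rsym_num2" unfolding Rsym_num2_def
  proof (rule continuous_on_infsum_dominated[where h = "\<lambda>k. real (snd k) * Zterm g1 g2 \<phi>' k"])
    show "(\<lambda>k. real (snd k) * Zterm g1 g2 \<phi>' k) summable_on UNIV" by (rule Rfun_moment_summable(2)[OF \<phi>'])
    show "\<bar>real (snd k) * (snd x * \<bar>snd x\<bar> ^ (snd k - 1)) * \<bar>fst x\<bar> ^ fst k / gfact g1 g2 k\<bar>
        \<le> real (snd k) * Zterm g1 g2 \<phi>' k" if "x \<in> \<Omega>" for x k
    proof -
      have "\<bar>real (snd k) * (snd x * \<bar>snd x\<bar> ^ (snd k - 1)) * \<bar>fst x\<bar> ^ fst k / gfact g1 g2 k\<bar>
          = \<bar>real (snd k) * (snd x * \<bar>snd x\<bar> ^ (snd k - 1))\<bar> * (\<bar>fst x\<bar> ^ fst k / gfact g1 g2 k)"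
        using gfact_pos[of k] by (simp add: abs_mult)
      also have "\<dots> = real (snd k) * (\<bar>fst x\<bar> ^ fst k * \<bar>snd x\<bar> ^ snd k / gfact g1 g2 k)"
        by (simp only: abs_of_nat_mult_odd_power) (simp add: mult_ac)
      finally show ?thesis using dom[OF that, of "snd k" k] by simp
    qed
  qed (auto intro!: continuous_intros simp: gfact_neq_0)
qed

lemma continuous_on_Rsym:
  assumes \<phi>': "\<phi>' \<in> DR g1 g2" and bound: "\<And>x. x \<in> \<Omega> \<Longrightarrow> \<bar>fst x\<bar> \<le> fst \<phi>' \<and> \<bar>snd x\<bar> \<le> snd \<phi>'"
  shows "continuous_on \<Omega> Rsym"
proof -
  have "Zfun g1 g2 (map_prod abs abs x) \<noteq> 0" if "x \<in> \<Omega>" for x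
  proof -
    have "map_prod abs abs x \<in> DZ g1 g2"
      using DZ_mono(1)[OF DR_DZ[OF \<phi>'], of "map_prod abs abs x"] bound[OF that] by simp
    then show ?thesis using Zfun_ge_1 by fastforce
  qed
  then have "continuous_on \<Omega> (\<lambda>x. (Rsym_num1 x / Zfun g1 g2 (map_prod abs abs x),
      Rsym_num2 x / Zfun g1 g2 (map_prod abs abs x)))"
    using continuous_on_Rsym_num[OF assms] continuous_on_Zfun_abs[OF DR_DZ[OF \<phi>'] bound]
    by (intro continuous_intros) auto
  then show ?thesis by (simp add: Rsym_eq_quotient[abs_def])
qed

end

lemma scale_margin:
  fixes c C \<delta> :: real
  assumes "0 \<le> c" "c \<le> C" "0 < \<delta>"
  shows "(C + 2 * \<delta>) / (C + \<delta>) * (c + \<delta>) \<le> c + 2 * \<delta>"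
proof -
  have "(C + 2 * \<delta>) * (c + \<delta>) \<le> (c + 2 * \<delta>) * (C + \<delta>)"
    using mult_right_mono[OF assms(2), of \<delta>] assms(3) by (simp add: algebra_simps)
  then show ?thesis using assms by (simp add: pos_divide_le_eq)
qed

context two_species_rate
begin

lemma scaled_Zfun_mono:
  assumes "s *\<^sub>R \<phi> \<in> DZ g1 g2" "Zfun g1 g2 (s *\<^sub>R \<phi>) \<le> M" "\<phi> \<in> Rplus2" "0 \<le> t" "t \<le> s"
  shows "t *\<^sub>R \<phi> \<in> DZ g1 g2" "Zfun g1 g2 (t *\<^sub>R \<phi>) \<le> M"
proof -
  have "0 \<le> fst \<phi>" "0 \<le> snd \<phi>" using assms(3) by (auto simp: Rplus2_def)
  then have "0 \<le> t * fst \<phi>" "t * fst \<phi> \<le> s * fst \<phi>" "0 \<le> t * snd \<phi>" "t * snd \<phi> \<le> s * snd \<phi>"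
    using assms(4,5) by (auto intro: mult_right_mono)
  then show "t *\<^sub>R \<phi> \<in> DZ g1 g2" "Zfun g1 g2 (t *\<^sub>R \<phi>) \<le> M"
    using DZ_mono[OF assms(1), of "t *\<^sub>R \<phi>"] Zfun_mono[OF assms(1), of "t *\<^sub>R \<phi>"] assms(2) by auto
qed

text \<open>Continuity of \<open>\<Phi> = R\<^sup>-\<^sup>1\<close> at interior points, by invariance of domain for \<open>Rsym\<close>.\<close>
lemma Rfun_inverse_nhd:
  assumes "\<phi>0 \<in> DR_int g1 g2" "0 < \<delta>"
  obtains V where "open V" "Rfun g1 g2 \<phi>0 \<in> V"
    and "\<And>\<phi>. \<phi> \<in> DR g1 g2 \<Longrightarrow> Rfun g1 g2 \<phi> \<in> V \<Longrightarrow> dist \<phi>0 \<phi> < \<delta>"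
proof -
  obtain U where U: "open U" "\<phi>0 \<in> U" "U \<inter> Rplus2 \<subseteq> DR g1 g2" and \<phi>0: "\<phi>0 \<in> Rplus2"
    using assms(1) unfolding DR_int_def by blast
  obtain e where e: "0 < e" "ball \<phi>0 e \<subseteq> U" using U(1,2) open_contains_ball by blast
  define r where "r = min \<delta> (e / 3)"
  have r: "0 < r" "r \<le> \<delta>" "2 * r < e" using assms(2) e(1) by (auto simp: r_def)
  define \<phi>' where "\<phi>' = (fst \<phi>0 + r, snd \<phi>0 + r)"
  have "dist \<phi>0 \<phi>' \<le> r + r"
    using sqrt_sum_squares_le_sum_abs[of r r] r(1) by (cases \<phi>0) (simp add: \<phi>'_def dist_Pair_Pair dist_real_def)
  then have "\<phi>' \<in> U" using r(3) e(2) by auto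
  moreover have "\<phi>' \<in> Rplus2" using \<phi>0 r(1) by (simp add: \<phi>'_def Rplus2_def)
  ultimately have \<phi>': "\<phi>' \<in> DR g1 g2" using U(3) by blast
  define \<Omega> where "\<Omega> = map_prod abs abs -` ball \<phi>0 r"
  have \<Omega>_DR: "map_prod abs abs x \<in> DR g1 g2" if "x \<in> \<Omega>" for x
  proof -
    have "map_prod abs abs x \<in> U" using that r e(2) by (auto simp: \<Omega>_def)
    moreover have "map_prod abs abs x \<in> Rplus2" by (simp add: Rplus2_def)
    ultimately show ?thesis using U(3) by blast
  qed
  have near: "\<bar>fst \<phi> - fst \<phi>0\<bar> < r \<and> \<bar>snd \<phi> - snd \<phi>0\<bar> < r" if "\<phi> \<in> ball \<phi>0 r" for \<phi>
    using that dist_fst_le[of \<phi>0 \<phi>] dist_snd_le[of \<phi>0 \<phi>] by (auto simp: dist_real_def dist_commute)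
  have "open (Rsym ` \<Omega>)"
  proof (rule invariance_of_domain)
    show "continuous_on \<Omega> Rsym"
      by (rule continuous_on_Rsym[OF \<phi>']) (use near in \<open>fastforce simp: \<Omega>_def \<phi>'_def\<close>)
    show "open \<Omega>"
      unfolding \<Omega>_def by (intro open_vimage) (auto intro!: continuous_intros simp: map_prod_def split_def)
    show "inj_on Rsym \<Omega>" using inj_on_Rsym by (rule inj_on_subset) (auto intro: \<Omega>_DR)
  qed
  moreover have "\<phi>0 \<in> \<Omega>" using \<phi>0 r(1) by (cases \<phi>0) (simp add: \<Omega>_def Rplus2_def)
  then have "Rfun g1 g2 \<phi>0 \<in> Rsym ` \<Omega>" using Rsym_eq_Rfun[OF \<phi>0] by (metis image_eqI)
  moreover have "dist \<phi>0 \<phi> < \<delta>" if \<phi>: "\<phi> \<in> DR g1 g2" "Rfun g1 g2 \<phi> \<in> Rsym ` \<Omega>" for \<phi>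
  proof -
    obtain x where x: "x \<in> \<Omega>" "Rfun g1 g2 \<phi> = Rsym x" using \<phi>(2) by blast
    have "map_prod abs abs (Rfun g1 g2 \<phi>) = Rfun g1 g2 \<phi>"
      using Rfun_nonneg[OF DZ_Rplus2[OF DR_DZ[OF \<phi>(1)]]] by (simp add: prod_eq_iff)
    then have "Rfun g1 g2 (map_prod abs abs x) = Rfun g1 g2 \<phi>" using abs_Rsym[of x] x(2) by simp
    then have "map_prod abs abs x = \<phi>" using inj_onD[OF inj_on_Rfun] \<Omega>_DR[OF x(1)] \<phi>(1) by blast
    then show ?thesis using x(1) r(2) by (auto simp: \<Omega>_def)
  qed
  ultimately show ?thesis using that by blast
qed

lemma Rfun_local_scaling_bound:
  assumes "\<phi>0 \<in> DR_int g1 g2"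
  obtains V s M where "open V" "Rfun g1 g2 \<phi>0 \<in> V" "1 < s"
    and "\<And>\<phi>. \<phi> \<in> DR g1 g2 \<Longrightarrow> Rfun g1 g2 \<phi> \<in> V \<Longrightarrow> s *\<^sub>R \<phi> \<in> DZ g1 g2 \<and> Zfun g1 g2 (s *\<^sub>R \<phi>) \<le> M"
proof -
  obtain U where U: "open U" "\<phi>0 \<in> U" "U \<inter> Rplus2 \<subseteq> DR g1 g2" and \<phi>0: "\<phi>0 \<in> Rplus2"
    using assms unfolding DR_int_def by blast
  obtain e where e: "0 < e" "ball \<phi>0 e \<subseteq> U" using U(1,2) open_contains_ball by blast
  define \<delta> where "\<delta> = e / 5"
  have \<delta>: "0 < \<delta>" using e by (simp add: \<delta>_def)
  define \<phi>' where "\<phi>' = (fst \<phi>0 + 2 * \<delta>, snd \<phi>0 + 2 * \<delta>)"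
  have "dist \<phi>0 \<phi>' \<le> 2 * \<delta> + 2 * \<delta>"
    using sqrt_sum_squares_le_sum_abs[of "2 * \<delta>" "2 * \<delta>"] \<delta>
    by (cases \<phi>0) (simp add: \<phi>'_def dist_Pair_Pair dist_real_def)
  then have "\<phi>' \<in> U" using e by (auto simp: \<delta>_def)
  moreover have "\<phi>' \<in> Rplus2" using \<phi>0 \<delta> by (simp add: \<phi>'_def Rplus2_def)
  ultimately have \<phi>': "\<phi>' \<in> DR g1 g2" using U(3) by blast
  obtain V where V: "open V" "Rfun g1 g2 \<phi>0 \<in> V"
    and near: "\<And>\<phi>. \<phi> \<in> DR g1 g2 \<Longrightarrow> Rfun g1 g2 \<phi> \<in> V \<Longrightarrow> dist \<phi>0 \<phi> < \<delta>"
    using Rfun_inverse_nhd[OF assms \<delta>] by blast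
  define C where "C = fst \<phi>0 + snd \<phi>0"
  define s where "s = (C + 2 * \<delta>) / (C + \<delta>)"
  have C: "0 \<le> fst \<phi>0" "0 \<le> snd \<phi>0" "fst \<phi>0 \<le> C" "snd \<phi>0 \<le> C" using \<phi>0 by (auto simp: Rplus2_def C_def)
  then have "1 < s" using \<delta> by (simp add: s_def)
  moreover have "s *\<^sub>R \<phi> \<in> DZ g1 g2 \<and> Zfun g1 g2 (s *\<^sub>R \<phi>) \<le> Zfun g1 g2 \<phi>'"
    if \<phi>: "\<phi> \<in> DR g1 g2" "Rfun g1 g2 \<phi> \<in> V" for \<phi>
  proof -
    have "fst \<phi> \<le> fst \<phi>0 + \<delta>" "snd \<phi> \<le> snd \<phi>0 + \<delta>"
      using near[OF \<phi>] dist_fst_le[of \<phi>0 \<phi>] dist_snd_le[of \<phi>0 \<phi>] by (auto simp: dist_real_def)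
    then have "s * fst \<phi> \<le> s * (fst \<phi>0 + \<delta>)" "s * snd \<phi> \<le> s * (snd \<phi>0 + \<delta>)"
      using \<open>1 < s\<close> by (auto intro!: mult_left_mono)
    then have "s * fst \<phi> \<le> fst \<phi>'" "s * snd \<phi> \<le> snd \<phi>'"
      using scale_margin[OF C(1,3) \<delta>] scale_margin[OF C(2,4) \<delta>] by (auto simp: \<phi>'_def s_def)
    moreover have "0 \<le> s * fst \<phi>" "0 \<le> s * snd \<phi>"
      using DZ_Rplus2[OF DR_DZ[OF \<phi>(1)]] \<open>1 < s\<close> by (auto simp: Rplus2_def)
    ultimately show ?thesis
      using DZ_mono[OF DR_DZ[OF \<phi>'], of "s *\<^sub>R \<phi>"] Zfun_mono[OF DR_DZ[OF \<phi>'], of "s *\<^sub>R \<phi>"] by auto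
  qed
  ultimately show ?thesis using that V by blast
qed

lemma compact_scaling_bound:
  assumes "compact K" "K \<subseteq> Rfun g1 g2 ` DR_int g1 g2"
  obtains s M where "1 < s"
    and "\<And>\<phi>. \<phi> \<in> DR g1 g2 \<Longrightarrow> Rfun g1 g2 \<phi> \<in> K \<Longrightarrow> s *\<^sub>R \<phi> \<in> DZ g1 g2 \<and> Zfun g1 g2 (s *\<^sub>R \<phi>) \<le> M"
proof -
  define good where "good V s M \<longleftrightarrow> open V \<and> 1 < s \<and>
      (\<forall>\<phi>\<in>DR g1 g2. Rfun g1 g2 \<phi> \<in> V \<longrightarrow> s *\<^sub>R \<phi> \<in> DZ g1 g2 \<and> Zfun g1 g2 (s *\<^sub>R \<phi>) \<le> M)"
    for V s M
  have "\<forall>\<rho>\<in>K. \<exists>V s M. \<rho> \<in> V \<and> good V s M"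
  proof
    fix \<rho> assume "\<rho> \<in> K"
    then obtain \<phi>0 where "\<phi>0 \<in> DR_int g1 g2" "\<rho> = Rfun g1 g2 \<phi>0" using assms(2) by blast
    then show "\<exists>V s M. \<rho> \<in> V \<and> good V s M"
      using Rfun_local_scaling_bound unfolding good_def by metis
  qed
  then obtain V where "\<forall>\<rho>\<in>K. \<exists>s M. \<rho> \<in> V \<rho> \<and> good (V \<rho>) s M" by (rule bchoice[THEN exE])
  then obtain s where "\<forall>\<rho>\<in>K. \<exists>M. \<rho> \<in> V \<rho> \<and> good (V \<rho>) (s \<rho>) M" by (rule bchoice[THEN exE])
  then obtain M where VsM: "\<forall>\<rho>\<in>K. \<rho> \<in> V \<rho> \<and> good (V \<rho>) (s \<rho>) (M \<rho>)" by (rule bchoice[THEN exE])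
  then have "\<And>\<rho>. \<rho> \<in> K \<Longrightarrow> open (V \<rho>)" "K \<subseteq> (\<Union>\<rho>\<in>K. V \<rho>)" by (auto simp: good_def)
  then obtain T where T: "T \<subseteq> K" "finite T" "K \<subseteq> (\<Union>\<rho>\<in>T. V \<rho>)"
    by (rule compactE_image[OF assms(1)])
  define s0 where "s0 = Min (insert 2 (s ` T))"
  define M0 where "M0 = Max (insert 0 (M ` T))"
  show ?thesis
  proof
    show "1 < s0" unfolding s0_def using T VsM by (subst Min_gr_iff) (auto simp: good_def)
    fix \<phi> assume \<phi>: "\<phi> \<in> DR g1 g2" "Rfun g1 g2 \<phi> \<in> K"
    then obtain \<rho> where \<rho>: "\<rho> \<in> T" "Rfun g1 g2 \<phi> \<in> V \<rho>" using T(3) by blast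
    then have "s \<rho> *\<^sub>R \<phi> \<in> DZ g1 g2" "Zfun g1 g2 (s \<rho> *\<^sub>R \<phi>) \<le> M \<rho>"
      using VsM T(1) \<phi>(1) unfolding good_def by blast+
    moreover have "M \<rho> \<le> M0" unfolding M0_def using T(2) \<rho>(1) by (intro Max_ge) auto
    moreover have "s0 \<le> s \<rho>" unfolding s0_def using T(2) \<rho>(1) by (intro Min_le) auto
    ultimately show "s0 *\<^sub>R \<phi> \<in> DZ g1 g2 \<and> Zfun g1 g2 (s0 *\<^sub>R \<phi>) \<le> M0"
      using scaled_Zfun_mono[of "s \<rho>" \<phi> "M \<rho>" s0] DZ_Rplus2[OF DR_DZ[OF \<phi>(1)]] \<open>1 < s0\<close> by auto
  qed
qed

end

section \<open>The entropy inequality\<close>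

lemma neg_part_xlnx_le:
  fixes m v :: real
  assumes "0 < m" "0 \<le> v"
  shows "max 0 (- (m * ln (m / v))) \<le> v"
proof (cases "v = 0")
  case False
  then have "- (m * ln (m / v)) = m * ln (v / m)" using assms by (simp add: ln_div algebra_simps)
  also have "\<dots> \<le> m * (v / m - 1)" using False assms by (intro mult_left_mono ln_le_minus_one) auto
  also have "\<dots> = v - m" using assms by (simp add: field_simps)
  finally show ?thesis using assms by simp
qed simp

lemma young_entropy_ineq:
  fixes m v F :: real
  assumes "0 < m" "0 < v"
  shows "m * F \<le> m * ln (m / v) - m + v * exp F"
proof -
  have "1 + (F - ln (m / v)) \<le> exp (F - ln (m / v))" by (rule exp_ge_add_one_self)
  also have "\<dots> = exp F * v / m" using assms by (simp add: exp_diff)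
  finally have "m * (1 + (F - ln (m / v))) \<le> m * (exp F * v / m)" using assms by (intro mult_left_mono) auto
  then show ?thesis using assms by (simp add: algebra_simps)
qed

text \<open>Pointwise form of the entropy inequality, from Young's inequality applied to \<open>\<gamma> F - c\<close>.\<close>
lemma pos_part_xlnx_change_of_reference:
  fixes m v v' F \<gamma> c :: real
  assumes m: "0 < m" and v: "0 < v" and v': "0 < v'" and ratio: "v \<le> v' * exp F"
    and \<gamma>: "0 < \<gamma>" and c: "0 \<le> c"
  shows "max 0 (m * ln (m / v')) \<le> (1 + 1/\<gamma>) * max 0 (m * ln (m / v))
           + (exp (- c) / \<gamma>) * (v * exp (\<gamma> * F)) + (c / \<gamma>) * m"
proof -
  have "ln (v / v') \<le> F" using ratio v v' by (simp add: ln_div ln_mult ln_le_cancel_iff[symmetric] pos_divide_le_eq)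
  then have "m * ln (v / v') \<le> m * F" using m by (intro mult_left_mono) auto
  then have shift: "m * ln (m / v') \<le> m * ln (m / v) + m * F"
    using m v v' by (simp add: ln_div algebra_simps)
  have "m * (\<gamma> * F - c) \<le> m * ln (m / v) - m + v * exp (\<gamma> * F - c)"
    by (rule young_entropy_ineq[OF m v])
  moreover have "exp (\<gamma> * F - c) = exp (\<gamma> * F) * exp (- c)" by (simp add: exp_add[symmetric])
  ultimately have "\<gamma> * (m * F) \<le> m * ln (m / v) + v * exp (\<gamma> * F) * exp (- c) + m * c"
    using m by (simp add: algebra_simps)
  then have "m * F \<le> (m * ln (m / v) + v * exp (\<gamma> * F) * exp (- c) + m * c) / \<gamma>"
    using \<gamma> by (simp add: pos_le_divide_eq mult.commute)
  with shift have "m * ln (m / v') \<le> m * ln (m / v) + (m * ln (m / v) + v * exp (\<gamma> * F) * exp (- c) + m * c) / \<gamma>"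
    by linarith
  also have "\<dots> = (1 + 1/\<gamma>) * (m * ln (m / v)) + (exp (- c) / \<gamma>) * (v * exp (\<gamma> * F)) + (c / \<gamma>) * m"
    using \<gamma> by (simp add: field_simps)
  also have "\<dots> \<le> (1 + 1/\<gamma>) * max 0 (m * ln (m / v)) + (exp (- c) / \<gamma>) * (v * exp (\<gamma> * F)) + (c / \<gamma>) * m"
    using \<gamma> by (intro add_right_mono mult_left_mono) auto
  finally show ?thesis using m v \<gamma> c by (auto intro!: add_nonneg_nonneg mult_nonneg_nonneg)
qed

lemma ennreal_le_linear_combination:
  fixes x a b c u v w :: real
  assumes "x \<le> a * u + b * v + c * w" "0 \<le> a" "0 \<le> u" "0 \<le> b" "0 \<le> v" "0 \<le> c" "0 \<le> w"
  shows "ennreal x \<le> ennreal a * ennreal u + ennreal b * ennreal v + ennreal c * ennreal w"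
proof -
  have "ennreal x \<le> ennreal (a * u + b * v + c * w)" using assms(1) by (rule ennreal_leI)
  also have "\<dots> = ennreal a * ennreal u + ennreal b * ennreal v + ennreal c * ennreal w"
    using assms(2-) by (simp only: ennreal_mult[symmetric]) (simp only: ennreal_plus mult_nonneg_nonneg add_nonneg_nonneg)
  finally show ?thesis .
qed

definition rel_entropy_pos :: "'a pmf \<Rightarrow> ('a \<Rightarrow> real) \<Rightarrow> ennreal" where
  "rel_entropy_pos \<mu> \<nu> = (\<integral>\<^sup>+\<eta>. ennreal (max 0 (pmf \<mu> \<eta> * ln (pmf \<mu> \<eta> / \<nu> \<eta>))) \<partial>count_space (set_pmf \<mu>))"

lemma rel_entropy_le_pos:
  assumes "\<And>\<eta>. \<eta> \<in> set_pmf \<mu> \<Longrightarrow> 0 < \<nu> \<eta>"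
  shows "rel_entropy \<mu> \<nu> \<le> enn2ereal (rel_entropy_pos \<mu> \<nu>)"
  using assms by (auto simp: rel_entropy_def rel_entropy_pos_def set_pmf_iff intro: ereal_diff_le_self)

lemma rel_entropy_pos_le:
  assumes "\<And>\<eta>. \<eta> \<in> set_pmf \<mu> \<Longrightarrow> 0 \<le> \<nu> \<eta>"
    and mass: "(\<integral>\<^sup>+\<eta>. ennreal (\<nu> \<eta>) \<partial>count_space (set_pmf \<mu>)) \<le> 1"
  shows "enn2ereal (rel_entropy_pos \<mu> \<nu>) \<le> rel_entropy \<mu> \<nu> + 1"
proof (cases "\<forall>\<eta>. 0 < pmf \<mu> \<eta> \<longrightarrow> 0 < \<nu> \<eta>")
  case True
  define neg where
    "neg = (\<integral>\<^sup>+\<eta>. ennreal (max 0 (- (pmf \<mu> \<eta> * ln (pmf \<mu> \<eta> / \<nu> \<eta>)))) \<partial>count_space (set_pmf \<mu>))"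
  have "rel_entropy \<mu> \<nu> = enn2ereal (rel_entropy_pos \<mu> \<nu>) - enn2ereal neg"
    using True by (simp add: rel_entropy_def rel_entropy_pos_def neg_def)
  moreover have "neg \<le> (\<integral>\<^sup>+\<eta>. ennreal (\<nu> \<eta>) \<partial>count_space (set_pmf \<mu>))"
    unfolding neg_def by (intro nn_integral_mono ennreal_leI neg_part_xlnx_le) (auto simp: pmf_positive assms(1))
  then have "neg \<le> 1" using mass by simp
  ultimately show ?thesis
    by (cases "rel_entropy_pos \<mu> \<nu>"; cases neg) (auto simp: one_ennreal.rep_eq top_unique)
next
  case False
  then have "rel_entropy \<mu> \<nu> = \<infinity>" unfolding rel_entropy_def by (rule if_not_P)
  then show ?thesis by simp
qed

lemma rel_entropy_pos_change_of_reference: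
  fixes \<mu> :: "'a pmf" and \<nu> \<nu>' F :: "'a \<Rightarrow> real"
  assumes \<nu>_pos: "\<And>\<eta>. \<eta> \<in> set_pmf \<mu> \<Longrightarrow> 0 < \<nu> \<eta>" and \<nu>'_pos: "\<And>\<eta>. \<eta> \<in> set_pmf \<mu> \<Longrightarrow> 0 < \<nu>' \<eta>"
    and ratio: "\<And>\<eta>. \<eta> \<in> set_pmf \<mu> \<Longrightarrow> \<nu> \<eta> \<le> \<nu>' \<eta> * exp (F \<eta>)"
    and \<gamma>: "0 < \<gamma>" and E: "0 < E"
    and moment: "(\<integral>\<^sup>+\<eta>. ennreal (\<nu> \<eta> * exp (\<gamma> * F \<eta>)) \<partial>count_space (set_pmf \<mu>)) \<le> ennreal E"
  shows "rel_entropy_pos \<mu> \<nu>' \<le> ennreal (1 + 1/\<gamma>) * rel_entropy_pos \<mu> \<nu> + ennreal ((1 + max 0 (ln E)) / \<gamma>)"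
proof -
  define M where "M = count_space (set_pmf \<mu>)"
  define c where "c = max 0 (ln E)"
  have c: "0 \<le> c" "exp (- c) * E \<le> 1"
    using E by (auto simp: c_def exp_minus field_simps max_def not_le ln_ge_iff)
  have pointwise: "ennreal (max 0 (pmf \<mu> \<eta> * ln (pmf \<mu> \<eta> / \<nu>' \<eta>)))
      \<le> ennreal (1 + 1/\<gamma>) * ennreal (max 0 (pmf \<mu> \<eta> * ln (pmf \<mu> \<eta> / \<nu> \<eta>)))
        + ennreal (exp (- c) / \<gamma>) * ennreal (\<nu> \<eta> * exp (\<gamma> * F \<eta>)) + ennreal (c / \<gamma>) * ennreal (pmf \<mu> \<eta>)"
    if \<eta>: "\<eta> \<in> set_pmf \<mu>" for \<eta>
    using pos_part_xlnx_change_of_reference[OF pmf_positive[OF \<eta>] \<nu>_pos[OF \<eta>] \<nu>'_pos[OF \<eta>] ratio[OF \<eta>] \<gamma> c(1)]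
      \<gamma> c(1) \<nu>_pos[OF \<eta>]
    by (intro ennreal_le_linear_combination) auto
  have "rel_entropy_pos \<mu> \<nu>' \<le> (\<integral>\<^sup>+\<eta>. ennreal (1 + 1/\<gamma>) * ennreal (max 0 (pmf \<mu> \<eta> * ln (pmf \<mu> \<eta> / \<nu> \<eta>)))
      + ennreal (exp (- c) / \<gamma>) * ennreal (\<nu> \<eta> * exp (\<gamma> * F \<eta>)) + ennreal (c / \<gamma>) * ennreal (pmf \<mu> \<eta>) \<partial>M)"
    unfolding rel_entropy_pos_def M_def by (intro nn_integral_mono) (use pointwise in simp)
  also have "\<dots> = ennreal (1 + 1/\<gamma>) * rel_entropy_pos \<mu> \<nu>
      + ennreal (exp (- c) / \<gamma>) * (\<integral>\<^sup>+\<eta>. ennreal (\<nu> \<eta> * exp (\<gamma> * F \<eta>)) \<partial>M)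
      + ennreal (c / \<gamma>) * (\<integral>\<^sup>+\<eta>. ennreal (pmf \<mu> \<eta>) \<partial>M)"
    by (simp add: rel_entropy_pos_def M_def nn_integral_add nn_integral_cmult)
  also have "(\<integral>\<^sup>+\<eta>. ennreal (pmf \<mu> \<eta>) \<partial>M) = 1"
    by (simp add: M_def nn_integral_pmf emeasure_pmf)
  also have "(\<integral>\<^sup>+\<eta>. ennreal (\<nu> \<eta> * exp (\<gamma> * F \<eta>)) \<partial>M) \<le> ennreal E"
    using moment by (simp add: M_def)
  also have "ennreal (exp (- c) / \<gamma>) * ennreal E \<le> ennreal (1 / \<gamma>)"
    using c(2) \<gamma> E by (simp add: ennreal_mult'[symmetric] ennreal_leI divide_right_mono)
  finally show ?thesis
    using \<gamma> c(1) by (simp add: c_def add.assoc mult_left_mono ennreal_plus[symmetric] add_divide_distrib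
        del: ennreal_plus)
qed

text \<open>The mass condition bounds the negative part of the entropy integrand, so that \<open>H(\<mu>|\<nu>)\<close>
  controls its positive part.\<close>
lemma rel_entropy_change_of_reference:
  fixes \<mu> :: "'a pmf" and \<nu> \<nu>' F :: "'a \<Rightarrow> real"
  assumes \<nu>_nonneg: "\<And>\<eta>. \<eta> \<in> set_pmf \<mu> \<Longrightarrow> 0 \<le> \<nu> \<eta>"
    and \<nu>'_pos: "\<And>\<eta>. \<eta> \<in> set_pmf \<mu> \<Longrightarrow> 0 < \<nu>' \<eta>"
    and ratio: "\<And>\<eta>. \<eta> \<in> set_pmf \<mu> \<Longrightarrow> \<nu> \<eta> \<le> \<nu>' \<eta> * exp (F \<eta>)"
    and mass: "(\<integral>\<^sup>+\<eta>. ennreal (\<nu> \<eta>) \<partial>count_space (set_pmf \<mu>)) \<le> 1"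
    and \<gamma>: "0 < \<gamma>" and E: "0 < E"
    and moment: "(\<integral>\<^sup>+\<eta>. ennreal (\<nu> \<eta> * exp (\<gamma> * F \<eta>)) \<partial>count_space (set_pmf \<mu>)) \<le> ennreal E"
  shows "rel_entropy \<mu> \<nu>' \<le> ereal (1 + 1/\<gamma>) * (rel_entropy \<mu> \<nu> + 1) + ereal ((1 + max 0 (ln E)) / \<gamma>)"
proof (cases "\<forall>\<eta>. 0 < pmf \<mu> \<eta> \<longrightarrow> 0 < \<nu> \<eta>")
  case True
  then have "\<And>\<eta>. \<eta> \<in> set_pmf \<mu> \<Longrightarrow> 0 < \<nu> \<eta>" by (simp add: set_pmf_iff)
  from rel_entropy_pos_change_of_reference[OF this \<nu>'_pos ratio \<gamma> E moment]
  have "enn2ereal (rel_entropy_pos \<mu> \<nu>') \<le>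
      ereal (1 + 1/\<gamma>) * enn2ereal (rel_entropy_pos \<mu> \<nu>) + ereal ((1 + max 0 (ln E)) / \<gamma>)"
    using \<gamma> by (simp add: less_eq_ennreal.rep_eq plus_ennreal.rep_eq times_ennreal.rep_eq del: ennreal_plus)
  also have "\<dots> \<le> ereal (1 + 1/\<gamma>) * (rel_entropy \<mu> \<nu> + 1) + ereal ((1 + max 0 (ln E)) / \<gamma>)"
    using rel_entropy_pos_le[OF \<nu>_nonneg mass] \<gamma> by (intro add_right_mono ereal_mult_left_mono) auto
  finally show ?thesis using rel_entropy_le_pos[OF \<nu>'_pos] by (rule order_trans[rotated])
next
  case False
  then have "rel_entropy \<mu> \<nu> = \<infinity>" unfolding rel_entropy_def by (rule if_not_P)
  moreover have "0 < 1 + 1/\<gamma>" using \<gamma> by (simp add: add_pos_pos)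
  ultimately show ?thesis by simp
qed

section \<open>Product measures on the torus\<close>

definition prod_density :: "'x set \<Rightarrow> 'k \<Rightarrow> ('x \<Rightarrow> 'k \<Rightarrow> real) \<Rightarrow> ('x \<Rightarrow> 'k) \<Rightarrow> real" where
  "prod_density A z p \<eta> = (if \<forall>x. x \<notin> A \<longrightarrow> \<eta> x = z then \<Prod>x\<in>A. p x (\<eta> x) else 0)"

lemma nn_integral_fixed_outside_eq_PiE:
  "(\<integral>\<^sup>+\<eta>. h (restrict \<eta> A) \<partial>count_space {\<eta>. \<forall>x. x \<notin> A \<longrightarrow> \<eta> x = z})
    = (\<integral>\<^sup>+g. h g \<partial>count_space (PiE A (\<lambda>_. UNIV)))"
proof (rule nn_integral_bij_count_space)
  show "bij_betw (\<lambda>\<eta>. restrict \<eta> A) {\<eta>. \<forall>x. x \<notin> A \<longrightarrow> \<eta> x = z} (PiE A (\<lambda>_. UNIV))"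
  proof (rule bij_betw_byWitness[where f' = "\<lambda>g x. if x \<in> A then g x else z"])
    show "\<forall>\<eta>\<in>{\<eta>. \<forall>x. x \<notin> A \<longrightarrow> \<eta> x = z}. (\<lambda>x. if x \<in> A then restrict \<eta> A x else z) = \<eta>"
      by (auto simp: fun_eq_iff)
    show "\<forall>g\<in>PiE A (\<lambda>_. UNIV). restrict (\<lambda>x. if x \<in> A then g x else z) A = g"
      by (auto simp: fun_eq_iff PiE_def extensional_def)
  qed auto
qed

lemma nn_integral_PiE_prod:
  fixes f :: "'x \<Rightarrow> 'k::countable \<Rightarrow> real"
  assumes A: "finite A" and nonneg: "\<And>x k. x \<in> A \<Longrightarrow> 0 \<le> f x k"
    and summable: "\<And>x. x \<in> A \<Longrightarrow> f x summable_on UNIV"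
  shows "(\<integral>\<^sup>+g. ennreal (\<Prod>x\<in>A. f x (g x)) \<partial>count_space (PiE A (\<lambda>_. UNIV)))
    = ennreal (\<Prod>x\<in>A. infsum (f x) UNIV)"
proof -
  have abs_summable: "Infinite_Set_Sum.abs_summable_on (\<lambda>g. \<Prod>x\<in>A. f x (g x)) (PiE A (\<lambda>_. UNIV))"
  proof (rule abs_summable_on_prod_PiE[OF A])
    fix x assume "x \<in> A"
    then show "Infinite_Set_Sum.abs_summable_on (f x) UNIV"
      using summable abs_summable_equivalent summable_on_iff_abs_summable_on_real by blast
  qed auto
  have "(\<integral>\<^sup>+g. ennreal (\<Prod>x\<in>A. f x (g x)) \<partial>count_space (PiE A (\<lambda>_. UNIV)))
      = ennreal (infsetsum (\<lambda>g. \<Prod>x\<in>A. f x (g x)) (PiE A (\<lambda>_. UNIV)))"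
    using nonneg by (intro nn_integral_conv_infsetsum abs_summable) (auto intro: prod_nonneg)
  also have "infsetsum (\<lambda>g. \<Prod>x\<in>A. f x (g x)) (PiE A (\<lambda>_. UNIV)) = (\<Prod>x\<in>A. infsum (f x) UNIV)"
  proof -
    have "infsum (\<lambda>g. \<Prod>x\<in>A. f x (g x)) (PiE A (\<lambda>_. UNIV)) = (\<Prod>x\<in>A. infsum (f x) UNIV)"
      by (rule infsum_prod_PiE_abs[OF A]) (use summable summable_on_iff_abs_summable_on_real in blast)
    then show ?thesis using infsetsum_infsum[OF abs_summable] by simp
  qed
  finally show ?thesis .
qed

lemma nn_integral_finite_product_le:
  fixes f :: "'x \<Rightarrow> 'k::countable \<Rightarrow> real"
  assumes A: "finite A" and nonneg: "\<And>x k. x \<in> A \<Longrightarrow> 0 \<le> f x k"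
    and summable: "\<And>x. x \<in> A \<Longrightarrow> f x summable_on UNIV"
    and le: "\<And>x. x \<in> A \<Longrightarrow> infsum (f x) UNIV \<le> c x"
    and S: "S \<subseteq> {\<eta>. \<forall>x. x \<notin> A \<longrightarrow> \<eta> x = z}"
  shows "(\<integral>\<^sup>+\<eta>. ennreal (\<Prod>x\<in>A. f x (\<eta> x)) \<partial>count_space S) \<le> ennreal (\<Prod>x\<in>A. c x)"
proof -
  define C where "C = {\<eta>. \<forall>x. x \<notin> A \<longrightarrow> \<eta> x = z}"
  define h where "h g = ennreal (\<Prod>x\<in>A. f x (g x))" for g
  have "(\<integral>\<^sup>+\<eta>. h \<eta> \<partial>count_space S) \<le> (\<integral>\<^sup>+\<eta>. h \<eta> \<partial>count_space C)"
    using S by (auto simp: nn_integral_count_space_indicator C_def indicator_def intro!: nn_integral_mono)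
  also have "\<dots> = (\<integral>\<^sup>+\<eta>. h (restrict \<eta> A) \<partial>count_space C)"
    by (intro nn_integral_cong) (simp add: h_def)
  also have "\<dots> = ennreal (\<Prod>x\<in>A. infsum (f x) UNIV)"
    unfolding C_def nn_integral_fixed_outside_eq_PiE unfolding h_def
    by (rule nn_integral_PiE_prod[OF A nonneg summable])
  also have "\<dots> \<le> ennreal (\<Prod>x\<in>A. c x)"
    using le nonneg by (intro ennreal_leI prod_mono) (auto intro: infsum_nonneg)
  finally show ?thesis by (simp add: h_def)
qed

lemma rel_entropy_prod_density_change_of_reference:
  fixes p q :: "'x \<Rightarrow> 'k::countable \<Rightarrow> real" and G :: "'k \<Rightarrow> real"
  assumes A: "finite A" and S: "set_pmf \<mu> \<subseteq> {\<eta>. \<forall>x. x \<notin> A \<longrightarrow> \<eta> x = z}"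
    and p_nonneg: "\<And>x k. x \<in> A \<Longrightarrow> 0 \<le> p x k"
    and p_summable: "\<And>x. x \<in> A \<Longrightarrow> p x summable_on UNIV"
    and p_mass: "\<And>x. x \<in> A \<Longrightarrow> infsum (p x) UNIV \<le> 1"
    and q_pos: "\<And>x k. x \<in> A \<Longrightarrow> 0 < q x k"
    and ratio: "\<And>x k. x \<in> A \<Longrightarrow> p x k \<le> q x k * exp (G k)"
    and \<gamma>: "0 < \<gamma>" and L: "0 < L"
    and moment_summable: "\<And>x. x \<in> A \<Longrightarrow> (\<lambda>k. p x k * exp (\<gamma> * G k)) summable_on UNIV"
    and moment: "\<And>x. x \<in> A \<Longrightarrow> infsum (\<lambda>k. p x k * exp (\<gamma> * G k)) UNIV \<le> L"
  shows "rel_entropy \<mu> (prod_density A z q)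
    \<le> ereal (1 + 1/\<gamma>) * (rel_entropy \<mu> (prod_density A z p) + 1)
      + ereal ((1 + real (card A) * max 0 (ln L)) / \<gamma>)"
proof -
  define F where "F \<eta> = (\<Sum>x\<in>A. G (\<eta> x))" for \<eta> :: "'x \<Rightarrow> 'k"
  have on_support: "prod_density A z v \<eta> = (\<Prod>x\<in>A. v x (\<eta> x))" if "\<eta> \<in> set_pmf \<mu>" for v \<eta>
    using S that by (auto simp: prod_density_def)
  have "rel_entropy \<mu> (prod_density A z q)
    \<le> ereal (1 + 1/\<gamma>) * (rel_entropy \<mu> (prod_density A z p) + 1)
      + ereal ((1 + max 0 (ln (L ^ card A))) / \<gamma>)"
  proof (rule rel_entropy_change_of_reference[where F = F])
    fix \<eta> assume \<eta>: "\<eta> \<in> set_pmf \<mu>"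
    show "0 \<le> prod_density A z p \<eta>" "0 < prod_density A z q \<eta>"
      using p_nonneg q_pos by (auto simp: on_support[OF \<eta>] intro: prod_nonneg prod_pos)
    have "(\<Prod>x\<in>A. p x (\<eta> x)) \<le> (\<Prod>x\<in>A. q x (\<eta> x) * exp (G (\<eta> x)))"
      using p_nonneg ratio by (intro prod_mono) auto
    then show "prod_density A z p \<eta> \<le> prod_density A z q \<eta> * exp (F \<eta>)"
      using A by (simp add: on_support[OF \<eta>] F_def prod.distrib exp_sum)
  next
    have "(\<integral>\<^sup>+\<eta>. ennreal (prod_density A z p \<eta>) \<partial>count_space (set_pmf \<mu>))
        = (\<integral>\<^sup>+\<eta>. ennreal (\<Prod>x\<in>A. p x (\<eta> x)) \<partial>count_space (set_pmf \<mu>))"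
      by (intro nn_integral_cong) (simp add: on_support)
    also have "\<dots> \<le> ennreal (\<Prod>x\<in>A. 1)"
      by (rule nn_integral_finite_product_le[OF A p_nonneg p_summable p_mass S])
    finally show "(\<integral>\<^sup>+\<eta>. ennreal (prod_density A z p \<eta>) \<partial>count_space (set_pmf \<mu>)) \<le> 1" by simp
  next
    have "(\<integral>\<^sup>+\<eta>. ennreal (prod_density A z p \<eta> * exp (\<gamma> * F \<eta>)) \<partial>count_space (set_pmf \<mu>))
        = (\<integral>\<^sup>+\<eta>. ennreal (\<Prod>x\<in>A. p x (\<eta> x) * exp (\<gamma> * G (\<eta> x))) \<partial>count_space (set_pmf \<mu>))"
      using A by (intro nn_integral_cong) (simp add: on_support F_def prod.distrib exp_sum sum_distrib_left)
    also have "\<dots> \<le> ennreal (\<Prod>x\<in>A. L)"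
      by (rule nn_integral_finite_product_le[OF A _ moment_summable moment S]) (simp add: p_nonneg)
    finally show "(\<integral>\<^sup>+\<eta>. ennreal (prod_density A z p \<eta> * exp (\<gamma> * F \<eta>)) \<partial>count_space (set_pmf \<mu>))
        \<le> ennreal (L ^ card A)" by simp
  qed (use \<gamma> L in auto)
  also have "max 0 (ln (L ^ card A)) = real (card A) * max 0 (ln L)"
    using L by (auto simp: ln_realpow max_def mult_le_0_iff zero_le_mult_iff)
  finally show ?thesis .
qed

lemma sites_eq_PiE: "sites N = PiE UNIV (\<lambda>_::'d::finite. {..<N})"
  by (auto simp: sites_def PiE_def Pi_def extensional_def)

lemma finite_sites: "finite (sites N :: ('d::finite \<Rightarrow> nat) set)"
  unfolding sites_eq_PiE by (intro finite_PiE) auto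

lemma card_sites: "card (sites N :: ('d::finite \<Rightarrow> nat) set) = N ^ CARD('d)"
  unfolding sites_eq_PiE by (simp add: card_PiE)

lemma scaled_site_in_cbox: "1 \<le> N \<Longrightarrow> x \<in> sites N \<Longrightarrow> scaled_site N x \<in> cbox 0 1"
  by (auto simp: mem_box_cart scaled_site_def sites_def divide_le_eq_1 less_imp_le)

lemma nuN_prof_eq_prod_density:
  "nuN_prof g1 g2 \<rho> N = prod_density (sites N) (0, 0) (\<lambda>x. nu1 g1 g2 (\<rho> (scaled_site N x)))"
  by (simp add: fun_eq_iff nuN_prof_def prod_density_def configs_def)

lemma nuN_const_eq_prod_density: "nuN_const g1 g2 a N = prod_density (sites N) (0, 0) (\<lambda>x. nu1 g1 g2 a)"
  by (simp add: fun_eq_iff nuN_const_def prod_density_def configs_def)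

section \<open>Uniform bounds along the profile\<close>

lemma limsup_ratio_bounded:
  fixes f g :: "nat \<Rightarrow> ereal" and n :: "nat \<Rightarrow> real"
  assumes f: "limsup (\<lambda>N. f N / ereal (n N)) < \<infinity>"
    and n: "\<forall>\<^sub>F N in sequentially. 1 \<le> n N"
    and g: "\<forall>\<^sub>F N in sequentially. g N \<le> ereal a * (f N + 1) + ereal (b + c * n N)"
    and abc: "0 \<le> a" "0 \<le> b" "0 \<le> c"
  shows "limsup (\<lambda>N. g N / ereal (n N)) < \<infinity>"
proof -
  have "limsup (\<lambda>N. f N / ereal (n N)) \<noteq> \<infinity>" using f by simp
  then obtain K :: nat where "limsup (\<lambda>N. f N / ereal (n N)) < ereal (real K)"
    unfolding less_PInf_Ex_of_nat by blast
  then have "\<forall>\<^sub>F N in sequentially. f N / ereal (n N) < ereal (real K)"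
    by (rule Limsup_lessD)
  with n g have "\<forall>\<^sub>F N in sequentially. g N / ereal (n N) \<le> ereal (a * K + a + b + c)"
  proof eventually_elim
    case (elim N)
    then have "f N \<le> ereal (real K * n N)"
      by (simp add: ereal_divide_less_iff mult.commute less_imp_le)
    then have "f N + 1 \<le> ereal (real K * n N + 1)"
      using add_right_mono[of "f N" "ereal (real K * n N)" 1] by simp
    then have "ereal a * (f N + 1) \<le> ereal (a * (real K * n N + 1))"
      using ereal_mult_left_mono[of "f N + 1" "ereal (real K * n N + 1)" "ereal a"] abc(1) by simp
    then have "g N \<le> ereal (a * (real K * n N + 1) + (b + c * n N))"
      using elim(2) by (metis add_right_mono order_trans plus_ereal.simps(1))
    also have "\<dots> \<le> ereal ((a * K + a + b + c) * n N)"
      using mult_left_mono[OF elim(1) abc(1)] mult_left_mono[OF elim(1) abc(2)]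
      by (simp add: algebra_simps)
    finally have "g N / ereal (n N) \<le> ereal ((a * K + a + b + c) * n N) / ereal (n N)"
      using elim(1) by (intro ereal_divide_right_mono) auto
    then show ?case using elim(1) by simp
  qed
  then have "limsup (\<lambda>N. g N / ereal (n N)) \<le> ereal (a * K + a + b + c)"
    by (rule Limsup_bounded)
  then show ?thesis by (rule le_less_trans) simp
qed

context two_species_rate
begin

lemma nubar1_reference_bounds:
  assumes \<phi>a: "\<phi>a \<in> DZ g1 g2" and \<phi>: "\<phi> \<in> DZ g1 g2" "fst \<phi> \<le> B * fst \<phi>a" "snd \<phi> \<le> B * snd \<phi>a"
    and B: "1 \<le> B" and s: "s *\<^sub>R \<phi> \<in> DZ g1 g2" "Zfun g1 g2 (s *\<^sub>R \<phi>) \<le> M"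
    and \<gamma>: "0 < \<gamma>" "exp (\<gamma> * ln B) \<le> s"
  defines "G \<equiv> \<lambda>k. ln (Zfun g1 g2 \<phi>a) + real (fst k + snd k) * ln B"
  shows "nubar1 g1 g2 \<phi> k \<le> nubar1 g1 g2 \<phi>a k * exp (G k)"
    and "(\<lambda>k. nubar1 g1 g2 \<phi> k * exp (\<gamma> * G k)) summable_on UNIV"
    and "infsum (\<lambda>k. nubar1 g1 g2 \<phi> k * exp (\<gamma> * G k)) UNIV \<le> exp (\<gamma> * ln (Zfun g1 g2 \<phi>a)) * M"
proof -
  have "0 \<le> fst \<phi>" "0 \<le> snd \<phi>" using DZ_Rplus2[OF \<phi>(1)] by (auto simp: Rplus2_def)
  have Za: "1 \<le> Zfun g1 g2 \<phi>a" by (rule Zfun_ge_1[OF \<phi>a])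
  have "nubar1 g1 g2 \<phi> k \<le> Zterm g1 g2 \<phi> k" by (rule nubar1_le_Zterm[OF \<phi>(1)])
  also have "\<dots> \<le> Zterm g1 g2 (B *\<^sub>R \<phi>a) k"
    using \<open>0 \<le> fst \<phi>\<close> \<open>0 \<le> snd \<phi>\<close> \<phi> by (intro Zterm_mono) auto
  also have "\<dots> = nubar1 g1 g2 \<phi>a k * exp (G k)"
  proof -
    have "exp (real (fst k + snd k) * ln B) = B ^ (fst k + snd k)"
      using B by (simp add: exp_of_nat_mult del: of_nat_add)
    then show ?thesis using Za by (simp add: G_def Zterm_scaleR nubar1_def exp_add del: of_nat_add)
  qed
  finally show "nubar1 g1 g2 \<phi> k \<le> nubar1 g1 g2 \<phi>a k * exp (G k)" .
  define E where "E = exp (\<gamma> * ln (Zfun g1 g2 \<phi>a))"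
  have bound: "nubar1 g1 g2 \<phi> j * exp (\<gamma> * G j) \<le> E * Zterm g1 g2 (s *\<^sub>R \<phi>) j" for j
  proof -
    have "exp (\<gamma> * G j) = E * exp (\<gamma> * ln B) ^ (fst j + snd j)"
      by (simp add: G_def E_def distrib_left exp_add exp_of_nat_mult[symmetric] mult_ac)
    also have "\<dots> \<le> E * s ^ (fst j + snd j)"
      using \<gamma> by (auto simp: E_def intro!: power_mono)
    finally have "exp (\<gamma> * G j) \<le> E * s ^ (fst j + snd j)" .
    moreover have "0 \<le> nubar1 g1 g2 \<phi> j" "nubar1 g1 g2 \<phi> j \<le> Zterm g1 g2 \<phi> j"
      using nubar1_nonneg[OF DZ_Rplus2[OF \<phi>(1)]] nubar1_le_Zterm[OF \<phi>(1)] by auto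
    ultimately have "nubar1 g1 g2 \<phi> j * exp (\<gamma> * G j) \<le> Zterm g1 g2 \<phi> j * (E * s ^ (fst j + snd j))"
      by (intro mult_mono) auto
    then show ?thesis by (simp add: Zterm_scaleR mult_ac)
  qed
  have nonneg: "0 \<le> nubar1 g1 g2 \<phi> j * exp (\<gamma> * G j)" for j
    using nubar1_nonneg[OF DZ_Rplus2[OF \<phi>(1)]] by simp
  have majorant: "((\<lambda>j. E * Zterm g1 g2 (s *\<^sub>R \<phi>) j) has_sum (E * Zfun g1 g2 (s *\<^sub>R \<phi>))) UNIV"
    by (intro has_sum_cmult_right Zfun_has_sum s(1))
  show summable: "(\<lambda>j. nubar1 g1 g2 \<phi> j * exp (\<gamma> * G j)) summable_on UNIV"
    by (rule summable_on_comparison_test[OF has_sum_imp_summable[OF majorant]]) (use bound nonneg in auto)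
  have "infsum (\<lambda>j. nubar1 g1 g2 \<phi> j * exp (\<gamma> * G j)) UNIV \<le> E * Zfun g1 g2 (s *\<^sub>R \<phi>)"
    using infsum_mono[OF summable has_sum_imp_summable[OF majorant] bound] majorant
    by (simp add: infsumI)
  also have "\<dots> \<le> E * M" using s(2) by (simp add: E_def)
  finally show "infsum (\<lambda>j. nubar1 g1 g2 \<phi> j * exp (\<gamma> * G j)) UNIV \<le> exp (\<gamma> * ln (Zfun g1 g2 \<phi>a)) * M"
    by (simp add: E_def)
qed

lemma uniform_reference_bounds:
  assumes K: "compact K" "K \<subseteq> Rfun g1 g2 ` DR_int g1 g2"
    and \<phi>a: "\<phi>a \<in> DZ g1 g2" "0 < fst \<phi>a" "0 < snd \<phi>a"
  obtains \<gamma> L G where "0 < \<gamma>" "0 < L"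
    and "\<And>\<phi> k. \<phi> \<in> DR g1 g2 \<Longrightarrow> Rfun g1 g2 \<phi> \<in> K \<Longrightarrow> nubar1 g1 g2 \<phi> k \<le> nubar1 g1 g2 \<phi>a k * exp (G k)"
    and "\<And>\<phi>. \<phi> \<in> DR g1 g2 \<Longrightarrow> Rfun g1 g2 \<phi> \<in> K \<Longrightarrow> (\<lambda>k. nubar1 g1 g2 \<phi> k * exp (\<gamma> * G k)) summable_on UNIV"
    and "\<And>\<phi>. \<phi> \<in> DR g1 g2 \<Longrightarrow> Rfun g1 g2 \<phi> \<in> K \<Longrightarrow> infsum (\<lambda>k. nubar1 g1 g2 \<phi> k * exp (\<gamma> * G k)) UNIV \<le> L"
proof -
  obtain s M0 where s: "1 < s"
    and sM0: "\<And>\<phi>. \<phi> \<in> DR g1 g2 \<Longrightarrow> Rfun g1 g2 \<phi> \<in> K \<Longrightarrow> s *\<^sub>R \<phi> \<in> DZ g1 g2 \<and> Zfun g1 g2 (s *\<^sub>R \<phi>) \<le> M0"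
    using compact_scaling_bound[OF K] by blast
  define M where "M = max 1 M0"
  have sM: "s *\<^sub>R \<phi> \<in> DZ g1 g2" "Zfun g1 g2 (s *\<^sub>R \<phi>) \<le> M" if "\<phi> \<in> DR g1 g2" "Rfun g1 g2 \<phi> \<in> K" for \<phi>
    using sM0[OF that] by (auto simp: M_def)
  define B where "B = max 1 (max (g1 (1, 0) * M / fst \<phi>a) (g2 (0, 1) * M / snd \<phi>a))"
  have B1: "1 \<le> B" by (simp add: B_def)
  have g: "0 < g1 (1, 0)" "0 < g2 (0, 1)" using g1_pos[of "(1, 0)"] g2_pos[of "(0, 1)"] by auto
  have \<phi>_le_B: "fst \<phi> \<le> B * fst \<phi>a \<and> snd \<phi> \<le> B * snd \<phi>a" if "\<phi> \<in> DR g1 g2" "Rfun g1 g2 \<phi> \<in> K" for \<phi>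
  proof -
    have dz: "\<phi> \<in> DZ g1 g2" using that(1) by (rule DR_DZ)
    have "Zfun g1 g2 \<phi> \<le> M"
      using scaled_Zfun_mono(2)[OF sM[OF that] DZ_Rplus2[OF dz], of 1] s by simp
    then have "g1 (1, 0) * Zfun g1 g2 \<phi> \<le> g1 (1, 0) * M" "g2 (0, 1) * Zfun g1 g2 \<phi> \<le> g2 (0, 1) * M"
      using g by simp_all
    then have "fst \<phi> \<le> g1 (1, 0) * M" "snd \<phi> \<le> g2 (0, 1) * M"
      using fst_le_Zfun[OF dz] snd_le_Zfun[OF dz] by linarith+
    moreover have "g1 (1, 0) * M \<le> B * fst \<phi>a" "g2 (0, 1) * M \<le> B * snd \<phi>a"
      using \<phi>a(2,3) by (simp_all add: B_def flip: pos_divide_le_eq)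
    ultimately show ?thesis by linarith
  qed
  define \<gamma> where "\<gamma> = ln s / (ln B + 1)"
  have "0 \<le> ln B" "0 < ln s" using B1 s by simp_all
  then have \<gamma>: "0 < \<gamma>" by (simp add: \<gamma>_def)
  have "\<gamma> * ln B = ln s * (ln B / (ln B + 1))" by (simp add: \<gamma>_def)
  also have "\<dots> \<le> ln s" using \<open>0 \<le> ln B\<close> \<open>0 < ln s\<close> by (intro mult_left_le) auto
  finally have "exp (\<gamma> * ln B) \<le> exp (ln s)" by simp
  then have \<gamma>B: "exp (\<gamma> * ln B) \<le> s" using s by simp
  define G where "G = (\<lambda>k::nat \<times> nat. ln (Zfun g1 g2 \<phi>a) + real (fst k + snd k) * ln B)"
  have "nubar1 g1 g2 \<phi> k \<le> nubar1 g1 g2 \<phi>a k * exp (G k)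
      \<and> (\<lambda>k. nubar1 g1 g2 \<phi> k * exp (\<gamma> * G k)) summable_on UNIV
      \<and> infsum (\<lambda>k. nubar1 g1 g2 \<phi> k * exp (\<gamma> * G k)) UNIV \<le> exp (\<gamma> * ln (Zfun g1 g2 \<phi>a)) * M"
    if "\<phi> \<in> DR g1 g2" "Rfun g1 g2 \<phi> \<in> K" for \<phi> k
    using nubar1_reference_bounds[OF \<phi>a(1) DR_DZ[OF that(1)] _ _ B1 sM[OF that] \<gamma> \<gamma>B] \<phi>_le_B[OF that]
    by (simp add: G_def)
  moreover have "0 < exp (\<gamma> * ln (Zfun g1 g2 \<phi>a)) * M" by (simp add: M_def)
  ultimately show ?thesis using that[OF \<gamma>] by blast
qed

lemma rel_entropy_nuN_const_le:
  fixes \<rho> :: "real ^ 'd::finite \<Rightarrow> real \<times> real" and \<mu> :: "(('d \<Rightarrow> nat) \<Rightarrow> nat \<times> nat) pmf"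
  assumes \<mu>: "set_pmf \<mu> \<subseteq> configs N"
    and a: "Phi g1 g2 a \<in> DZ g1 g2" "0 < fst (Phi g1 g2 a)" "0 < snd (Phi g1 g2 a)"
    and \<gamma>: "0 < \<gamma>" and L: "0 < L"
    and site: "\<And>x. x \<in> sites N \<Longrightarrow> Phi g1 g2 (\<rho> (scaled_site N x)) \<in> DZ g1 g2"
    and ratio: "\<And>x k. x \<in> sites N \<Longrightarrow> nu1 g1 g2 (\<rho> (scaled_site N x)) k \<le> nu1 g1 g2 a k * exp (G k)"
    and moment_summable: "\<And>x. x \<in> sites N \<Longrightarrow>
      (\<lambda>k. nu1 g1 g2 (\<rho> (scaled_site N x)) k * exp (\<gamma> * G k)) summable_on UNIV"
    and moment: "\<And>x. x \<in> sites N \<Longrightarrow>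
      infsum (\<lambda>k. nu1 g1 g2 (\<rho> (scaled_site N x)) k * exp (\<gamma> * G k)) UNIV \<le> L"
  shows "rel_entropy \<mu> (nuN_const g1 g2 a N)
    \<le> ereal (1 + 1/\<gamma>) * (rel_entropy \<mu> (nuN_prof g1 g2 \<rho> N) + 1)
      + ereal (1/\<gamma> + max 0 (ln L) / \<gamma> * real N ^ CARD('d))"
proof -
  have "rel_entropy \<mu> (prod_density (sites N) (0, 0) (\<lambda>_. nu1 g1 g2 a))
    \<le> ereal (1 + 1/\<gamma>) * (rel_entropy \<mu> (prod_density (sites N) (0, 0) (\<lambda>x. nu1 g1 g2 (\<rho> (scaled_site N x)))) + 1)
      + ereal ((1 + real (card (sites N :: ('d \<Rightarrow> nat) set)) * max 0 (ln L)) / \<gamma>)"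
  proof (rule rel_entropy_prod_density_change_of_reference[OF finite_sites _ _ _ _ _ ratio \<gamma> L
        moment_summable moment])
    show "set_pmf \<mu> \<subseteq> {\<eta>. \<forall>x. x \<notin> sites N \<longrightarrow> \<eta> x = (0, 0)}" using \<mu> by (simp add: configs_def)
    fix x :: "'d \<Rightarrow> nat" and k :: "nat \<times> nat" assume "x \<in> sites N"
    then have "Phi g1 g2 (\<rho> (scaled_site N x)) \<in> DZ g1 g2" by (rule site)
    then show "0 \<le> nu1 g1 g2 (\<rho> (scaled_site N x)) k"
      "nu1 g1 g2 (\<rho> (scaled_site N x)) summable_on UNIV"
      "infsum (nu1 g1 g2 (\<rho> (scaled_site N x))) UNIV \<le> 1"
      using nubar1_nonneg[OF DZ_Rplus2] nubar1_has_sum by (auto simp: nu1_def has_sum_iff)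
    show "0 < nu1 g1 g2 a k" using nubar1_pos[OF a(1)] a(2,3) by (simp add: nu1_def)
  qed
  then show ?thesis
    by (simp add: nuN_prof_eq_prod_density nuN_const_eq_prod_density card_sites add_divide_distrib ac_simps)
qed

lemma limsup_rel_entropy_nuN_const:
  fixes \<rho> :: "real ^ 'd::finite \<Rightarrow> real \<times> real"
    and \<mu> :: "nat \<Rightarrow> (('d \<Rightarrow> nat) \<Rightarrow> nat \<times> nat) pmf"
  assumes \<mu>: "\<And>N. set_pmf (\<mu> N) \<subseteq> configs N"
    and \<rho>: "continuous_on (cbox 0 1) \<rho>" "\<rho> ` cbox 0 1 \<subseteq> Rfun g1 g2 ` DR_int g1 g2"
    and ele: "entropy_local_equilibrium g1 g2 \<rho> \<mu>"
    and a: "a \<in> Rfun g1 g2 ` DR_int g1 g2" "0 < fst a" "0 < snd a"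
  shows "limsup (\<lambda>N. rel_entropy (\<mu> N) (nuN_const g1 g2 a N) / ereal (real N ^ CARD('d))) < \<infinity>"
proof -
  have \<phi>a: "Phi g1 g2 a \<in> DZ g1 g2" using DR_DZ[OF Phi_Rfun_image(1)[OF a(1)]] .
  note \<phi>a_pos = Phi_pos[OF a]
  have K: "compact (\<rho> ` cbox 0 1)" "\<rho> ` cbox 0 1 \<subseteq> Rfun g1 g2 ` DR_int g1 g2"
    using \<rho> by (auto intro: compact_continuous_image)
  obtain \<gamma> L G where \<gamma>: "0 < \<gamma>" and L: "0 < L"
    and ratio: "\<And>\<phi> k. \<phi> \<in> DR g1 g2 \<Longrightarrow> Rfun g1 g2 \<phi> \<in> \<rho> ` cbox 0 1 \<Longrightarrow>
      nubar1 g1 g2 \<phi> k \<le> nubar1 g1 g2 (Phi g1 g2 a) k * exp (G k)"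
    and moment_summable: "\<And>\<phi>. \<phi> \<in> DR g1 g2 \<Longrightarrow> Rfun g1 g2 \<phi> \<in> \<rho> ` cbox 0 1 \<Longrightarrow>
      (\<lambda>k. nubar1 g1 g2 \<phi> k * exp (\<gamma> * G k)) summable_on UNIV"
    and moment: "\<And>\<phi>. \<phi> \<in> DR g1 g2 \<Longrightarrow> Rfun g1 g2 \<phi> \<in> \<rho> ` cbox 0 1 \<Longrightarrow>
      infsum (\<lambda>k. nubar1 g1 g2 \<phi> k * exp (\<gamma> * G k)) UNIV \<le> L"
    using uniform_reference_bounds[OF K \<phi>a \<phi>a_pos] by blast
  have site: "Phi g1 g2 (\<rho> (scaled_site N x)) \<in> DR g1 g2"
    "Rfun g1 g2 (Phi g1 g2 (\<rho> (scaled_site N x))) \<in> \<rho> ` cbox 0 1"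
    if "1 \<le> N" "x \<in> sites N" for N x
  proof -
    have "\<rho> (scaled_site N x) \<in> \<rho> ` cbox 0 1" using scaled_site_in_cbox[OF that] by simp
    moreover from this have "\<rho> (scaled_site N x) \<in> Rfun g1 g2 ` DR_int g1 g2" using K(2) by blast
    ultimately show "Phi g1 g2 (\<rho> (scaled_site N x)) \<in> DR g1 g2"
      "Rfun g1 g2 (Phi g1 g2 (\<rho> (scaled_site N x))) \<in> \<rho> ` cbox 0 1"
      using Phi_Rfun_image by auto
  qed
  have "limsup (\<lambda>N. rel_entropy (\<mu> N) (nuN_prof g1 g2 \<rho> N) / ereal (real N ^ CARD('d))) < \<infinity>"
    using ele by (simp add: entropy_local_equilibrium_def)
  moreover have "\<forall>\<^sub>F N in sequentially. 1 \<le> real N ^ CARD('d)"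
    using eventually_ge_at_top[of 1] by eventually_elim simp
  moreover have "\<forall>\<^sub>F N in sequentially. rel_entropy (\<mu> N) (nuN_const g1 g2 a N)
      \<le> ereal (1 + 1/\<gamma>) * (rel_entropy (\<mu> N) (nuN_prof g1 g2 \<rho> N) + 1)
        + ereal (1/\<gamma> + max 0 (ln L) / \<gamma> * real N ^ CARD('d))"
    using eventually_ge_at_top[of 1]
  proof eventually_elim
    case (elim N)
    show ?case
      by (rule rel_entropy_nuN_const_le[where G = G, OF \<mu>[of N] \<phi>a \<phi>a_pos \<gamma> L])
        (use site[OF elim] DR_DZ ratio moment_summable moment in \<open>simp_all add: nu1_def\<close>)
  qed
  ultimately show ?thesis by (rule limsup_ratio_bounded) (use \<gamma> in auto)
qed

end

theorem mainTheorem5: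
  fixes g1 g2 :: "nat \<times> nat \<Rightarrow> real"
    and \<rho> :: "real ^ 'd::finite \<Rightarrow> real \<times> real"
    and \<mu> :: "nat \<Rightarrow> (('d \<Rightarrow> nat) \<Rightarrow> nat \<times> nat) pmf"
  assumes "local_jump_rate g1 g2"
    and "\<And>N. set_pmf (\<mu> N) \<subseteq> configs N"
    and "torus_profile \<rho>"
    and "range \<rho> \<subseteq> Rfun g1 g2 ` DR_int g1 g2"
    and "entropy_local_equilibrium g1 g2 \<rho> \<mu>"
  shows "(\<exists>a \<in> Rfun g1 g2 ` DR_int g1 g2. fst a > 0 \<and> snd a > 0 \<and>
            limsup (\<lambda>N. rel_entropy (\<mu> N) (nuN_const g1 g2 a N) / ereal (real N ^ CARD('d))) < \<infinity>)
       \<and> (\<forall>a \<in> Rfun g1 g2 ` DR_int g1 g2. fst a > 0 \<longrightarrow> snd a > 0 \<longrightarrow>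
            limsup (\<lambda>N. rel_entropy (\<mu> N) (nuN_const g1 g2 a N) / ereal (real N ^ CARD('d))) < \<infinity>)"
proof -
  interpret two_species_rate g1 g2 by (rule two_species_rate.intro) (rule assms(1))
  have "continuous_on (cbox 0 1) \<rho>"
    using assms(3) continuous_on_subset by (auto simp: torus_profile_def)
  moreover have "\<rho> ` cbox 0 1 \<subseteq> Rfun g1 g2 ` DR_int g1 g2" using assms(4) by auto
  ultimately have every: "\<forall>a \<in> Rfun g1 g2 ` DR_int g1 g2. fst a > 0 \<longrightarrow> snd a > 0 \<longrightarrow>
      limsup (\<lambda>N. rel_entropy (\<mu> N) (nuN_const g1 g2 a N) / ereal (real N ^ CARD('d))) < \<infinity>"
    using limsup_rel_entropy_nuN_const[OF assms(2) _ _ assms(5)] by blast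
  obtain \<phi>0 where "\<phi>0 \<in> DR_int g1 g2" using assms(4) by blast
  then show ?thesis using every Rfun_DR_int_pos by blast
qed

end
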